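(* Let $(X,\mu)$ be a non-atomic probability space with a tree $\mathcal T$, $p>1$, $0<f^p\leq F$, and $0<k<1$. Let $h_k(B)=\frac{(f-B)^p}{(1-k)^{p-1}}+\frac{B^p}{k^{p-1}}$ for $B\in[0,f]$. Then \[ B_p^{\mathcal T}(f,F,k)\leq\sup\left\{\left(F-\frac{(f-B)^p}{(1-k)^{p-1}}\right)\omega_p\!\left(\frac{B^p}{k^{p-1}\left(F-\frac{(f-B)^p}{(1-k)^{p-1}}\right)}\right)^p:\ B\in[0,f],\ h_k(B)\leq F\right\}. \]
   Context: A tree on a non-atomic probability space $(X,\mu)$ is a family $\mathcal T$ of measurable subsets of $X$ such that: (i) $X\in\mathcal T$ and $\mu(I)>0$ for every $I\in\mathcal T$; (ii) for every $I\in\mathcal T$ there is a finite or countable subset $C(I)\subseteq\mathcal T$ with at least two elements, whose elements are pairwise disjoint subsets of $I$ with union $I$; (iii) $\mathcal T=\bigcup_{m\geq0}\mathcal T_{(m)}$, where $\mathcal T_{(0)}=\{X\}$ and $\mathcal T_{(m+1)}=\bigcup_{I\in\mathcal T_{(m)}}C(I)$; (iv) $\lim_{m\to\infty}\sup_{I\in\mathcal T_{(m)}}\mu(I)=0$; (v) $\mathcal T$ differentiates $L^1(X,\mu)$. The dyadic maximal operator is $M_{\mathcal T}\phi(x)=\sup\{\frac{1}{\mu(I)}\int_I|\phi|\,d\mu: x\in I\in\mathcal T\}$. The Bellman function is $B_p^{\mathcal T}(f,F,k)=\sup\{\int_K(M_{\mathcal T}\phi)^p\,d\mu:\ \phi\geq0,\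 \int_X\phi\,d\mu=f,\ \int_X\phi^p\,d\mu=F,\ K\subseteq X\text{ measurable with }\mu(K)=k\}$. $\omega_p:[0,1]\to[1,\frac{p}{p-1}]$ is the inverse of $H_p(z)=pz^{p-1}-(p-1)z^p$ restricted to $[1,\frac{p}{p-1}]$. Note that $h_k(B)\le F$ ensures the argument of $\omega_p$ lies in $[0,1]$. *)

theory Defs
  imports "HOL-Probability.Probability"
begin

definition non_atomic :: "'a measure \<Rightarrow> bool" where
  "non_atomic M \<longleftrightarrow> (\<forall>A\<in>sets M. measure M A > 0 \<longrightarrow>
      (\<exists>B\<in>sets M. B \<subseteq> A \<and> 0 < measure M B \<and> measure M B < measure M A))"

fun tree_level :: "'a measure \<Rightarrow> ('a set \<Rightarrow> 'a set set) \<Rightarrow> nat \<Rightarrow> 'a set set" where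
  "tree_level M C 0 = {space M}"
| "tree_level M C (Suc m) = \<Union> (C ` tree_level M C m)"

definition differentiates_L1 :: "'a measure \<Rightarrow> 'a set set \<Rightarrow> bool" where
  "differentiates_L1 M T \<longleftrightarrow> (\<forall>\<phi> :: 'a \<Rightarrow> real. integrable M \<phi> \<longrightarrow>
     (AE x in M. \<forall>e>0. \<exists>d>0. \<forall>I\<in>T. x \<in> I \<longrightarrow> measure M I < d \<longrightarrow>
         \<bar>(LINT y:I|M. \<phi> y) / measure M I - \<phi> x\<bar> < e))"

definition is_tree :: "'a measure \<Rightarrow> 'a set set \<Rightarrow> bool" where
  "is_tree M T \<longleftrightarrow>
     space M \<in> T \<and> (\<forall>I\<in>T. I \<in> sets M \<and> measure M I > 0) \<and>
     (\<exists>C :: 'a set \<Rightarrow> 'a set set.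
        (\<forall>I\<in>T. C I \<subseteq> T \<and> countable (C I) \<and> (\<exists>J1\<in>C I. \<exists>J2\<in>C I. J1 \<noteq> J2) \<and>
               disjoint (C I) \<and> (\<forall>J\<in>C I. J \<subseteq> I) \<and> \<Union> (C I) = I) \<and>
        T = (\<Union>m. tree_level M C m) \<and>
        (\<lambda>m. SUP I\<in>tree_level M C m. measure M I) \<longlonglongrightarrow> 0) \<and>
     differentiates_L1 M T"

definition dyadic_max :: "'a measure \<Rightarrow> 'a set set \<Rightarrow> ('a \<Rightarrow> real) \<Rightarrow> 'a \<Rightarrow> ennreal" where
  "dyadic_max M T \<phi> x = (SUP I\<in>{I\<in>T. x \<in> I}.
      (\<integral>\<^sup>+ y. ennreal \<bar>\<phi> y\<bar> * indicator I y \<partial>M) / ennreal (measure M I))"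

definition epow :: "real \<Rightarrow> ennreal \<Rightarrow> ennreal" where
  "epow p t = (if t = \<infinity> then \<infinity> else ennreal (enn2real t powr p))"

definition bellman :: "'a measure \<Rightarrow> 'a set set \<Rightarrow> real \<Rightarrow> real \<Rightarrow> real \<Rightarrow> real \<Rightarrow> ennreal" where
  "bellman M T p f F k = (SUP (\<phi>, K)\<in>{(\<phi>, K). \<phi> \<in> borel_measurable M \<and> (\<forall>x. 0 \<le> \<phi> x) \<and>
        (\<integral>\<^sup>+ x. ennreal (\<phi> x) \<partial>M) = ennreal f \<and>
        (\<integral>\<^sup>+ x. ennreal (\<phi> x powr p) \<partial>M) = ennreal F \<and>
        K \<in> sets M \<and> measure M K = k}.
      \<integral>\<^sup>+ x. epow p (dyadic_max M T \<phi> x) * indicator K x \<partial>M)"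

definition H_p :: "real \<Rightarrow> real \<Rightarrow> real" where
  "H_p p z = p * z powr (p - 1) - (p - 1) * z powr p"

definition omega_p :: "real \<Rightarrow> real \<Rightarrow> real" where
  "omega_p p y = (THE z. z \<in> {1..p / (p - 1)} \<and> H_p p z = y)"

end

theory Submission
  imports Defs
begin

text \<open>
  Let \<open>\<phi>\<^sup>*\<close> be the decreasing rearrangement of \<open>\<phi>\<close> on \<open>(0,1]\<close> and
  \<open>U(s) = (1/s) \<integral>\<^sub>0\<^sup>s \<phi>\<^sup>*\<close> its Hardy mean. The weak-type inequality for the tree maximal
  operator \<open>M\<close>, combined with the Hardy-Littlewood inequality \<open>\<integral>\<^sub>S \<phi> \<le> \<integral>\<^sub>0\<^sup>\<mu>\<^sup>S \<phi>\<^sup>*\<close>, gives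
  \<open>\<lambda> \<le> U(\<mu>{M\<phi> > \<lambda>})\<close>. Hence the distribution of \<open>M\<phi>\<close> on a set \<open>K\<close> of measure \<open>k\<close>
  is dominated by that of \<open>U\<close> on \<open>(0,k]\<close>, and \<open>\<integral>\<^sub>K (M\<phi>)^p \<le> L = \<integral>\<^sub>0\<^sup>k U^p\<close>.

  Let \<open>B = \<integral>\<^sub>0\<^sup>k \<phi>\<^sup>* = k U(k)\<close> and \<open>G\<^sub>1 = \<integral>\<^sub>0\<^sup>k (\<phi>\<^sup>*)^p\<close>. Splitting \<open>L\<close> by levels of \<open>U\<close>, the
  levels below \<open>U(k)\<close> contribute \<open>k U(k)^p\<close>, and above it the weak-type estimate
  \<open>y |{U > y}| \<le> \<integral>\<^sub>{\<^sub>U\<^sub>>\<^sub>y\<^sub>} \<phi>\<^sup>*\<close> together with Fubini and Holder gives the Hardy inequality with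
  boundary term \<open>(p-1) L + k U(k)^p \<le> p G\<^sub>1^(1/p) L^((p-1)/p)\<close> (for \<open>U\<close> truncated at a level \<open>N\<close>,
  so that \<open>L\<close> is finite). Substituting \<open>L = G z^p\<close> for any \<open>G \<ge> G\<^sub>1\<close> turns it into
  \<open>B^p/(k^(p-1) G) \<le> H\<^sub>p(z)\<close>, that is \<open>L \<le> G \<omega>\<^sub>p(B^p/(k^(p-1) G))^p\<close>. Finally, Holder's inequality
  on \<open>(0,k]\<close> and \<open>(k,1]\<close> gives \<open>B^p \<le> k^(p-1) G\<^sub>1\<close> and \<open>(f-B)^p \<le> (1-k)^(p-1) (F - G\<^sub>1)\<close>, so
  \<open>G = F - (f-B)^p/(1-k)^(p-1)\<close> is admissible and \<open>h\<^sub>k(B) \<le> F\<close>.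
\<close>

section \<open>The function \<open>\<omega>\<^sub>p\<close>\<close>

lemma H_p_eq_mult:
  fixes p z :: real
  assumes "0 < z"
  shows "H_p p z = z powr (p - 1) * (p - (p - 1) * z)"
proof -
  have "z powr p = z powr (p - 1) * z"
    using powr_mult_base[of z "p - 1"] assms by (simp add: mult.commute)
  then show ?thesis unfolding H_p_def by (simp add: algebra_simps)
qed

lemma H_p_has_real_derivative:
  fixes p z :: real
  assumes "0 < z"
  shows "(H_p p has_real_derivative p * (p - 1) * z powr (p - 2) * (1 - z)) (at z)"
proof -
  have "((\<lambda>z. p * z powr (p - 1) - (p - 1) * z powr p) has_real_derivative
      p * ((p - 1) * z powr (p - 1 - 1)) - (p - 1) * (p * z powr (p - 1))) (at z)"
    using assms by (auto intro!: derivative_eq_intros)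
  moreover have "z powr (p - 1) = z powr (p - 2) * z"
    using powr_mult_base[of z "p - 2"] assms by (simp add: mult.commute)
  ultimately show ?thesis
    unfolding H_p_def[abs_def] by (simp add: algebra_simps)
qed

lemma H_p_strict_decreasing:
  fixes p a b :: real
  assumes p: "1 < p" and "1 \<le> a" "a < b"
  shows "H_p p b < H_p p a"
proof (rule DERIV_neg_imp_decreasing_open[OF \<open>a < b\<close>])
  have deriv: "(H_p p has_real_derivative p * (p - 1) * x powr (p - 2) * (1 - x)) (at x)"
    if "a \<le> x" for x
    using that assms by (intro H_p_has_real_derivative) auto
  show "\<exists>y. (H_p p has_real_derivative y) (at x) \<and> y < 0" if "a < x" "x < b" for x
    using deriv[of x] that assms
    by (intro exI[of _ "p * (p - 1) * x powr (p - 2) * (1 - x)"] conjI mult_pos_neg) auto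
  show "continuous_on {a..b} (H_p p)"
    using deriv by (intro continuous_at_imp_continuous_on ballI DERIV_isCont) auto
qed

lemma omega_p_inverse:
  fixes p y :: real
  assumes p: "1 < p" and y: "0 \<le> y" "y \<le> 1"
  shows "omega_p p y \<in> {1..p / (p - 1)}" and "H_p p (omega_p p y) = y"
proof -
  have lt: "1 < p / (p - 1)"
    using p by (simp add: field_simps)
  have "H_p p (p / (p - 1)) = 0"
    using p lt by (subst H_p_eq_mult) auto
  moreover have "H_p p 1 = 1"
    unfolding H_p_def by simp
  moreover have "continuous_on {1..p / (p - 1)} (H_p p)"
    unfolding H_p_def[abs_def] by (intro continuous_intros) auto
  ultimately obtain z where z: "1 \<le> z" "z \<le> p / (p - 1)" "H_p p z = y"
    using IVT2'[of "H_p p" "p / (p - 1)" y 1] y lt by auto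
  have unique: "w = z" if "w \<in> {1..p / (p - 1)}" "H_p p w = y" for w
  proof (rule ccontr)
    assume "w \<noteq> z"
    then show False
      using H_p_strict_decreasing[OF p, of w z] H_p_strict_decreasing[OF p, of z w] that z
      by (metis atLeastAtMost_iff less_irrefl linorder_neqE_linordered_idom)
  qed
  have "omega_p p y = z"
    unfolding omega_p_def
  proof (rule the_equality)
    show "z \<in> {1..p / (p - 1)} \<and> H_p p z = y" using z by simp
  qed (use unique in blast)
  then show "omega_p p y \<in> {1..p / (p - 1)}" "H_p p (omega_p p y) = y"
    using z by auto
qed

text \<open>Beyond \<open>p/(p-1)\<close> the function \<open>H_p\<close> is negative, so \<open>y \<le> H_p p z\<close> confines \<open>z\<close>
  to the range where \<open>H_p\<close> is decreasing.\<close>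
lemma le_omega_p:
  fixes p y z :: real
  assumes p: "1 < p" and y: "0 \<le> y" "y \<le> 1" and z: "0 \<le> z" "y \<le> H_p p z"
  shows "z \<le> omega_p p y"
proof (rule ccontr)
  assume "\<not> z \<le> omega_p p y"
  then have less: "omega_p p y < z" by simp
  note omega = omega_p_inverse[OF p y]
  show False
  proof (cases "z \<le> p / (p - 1)")
    case True
    then show False using H_p_strict_decreasing[OF p _ less] omega z by auto
  next
    case False
    then have "p - (p - 1) * z < 0" using p by (simp add: field_simps)
    then have "H_p p z < 0"
      using less omega by (subst H_p_eq_mult) (auto simp: mult_pos_neg)
    then show False using y z by linarith
  qed
qed

text \<open>The substitution \<open>L = G z\<^sup>p\<close> turns the inequality into \<open>K0/G \<le> H_p p z\<close>.\<close>
lemma le_omega_p_if_Hardy_inequality: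
  fixes p L G G1 K0 :: real
  assumes p: "1 < p" and L: "0 \<le> L" and G1: "0 < G1" "G1 \<le> G" and K0: "0 \<le> K0" "K0 \<le> G"
    and Hardy: "(p - 1) * L + K0 \<le> p * G1 powr (1 / p) * L powr ((p - 1) / p)"
  shows "L \<le> G * omega_p p (K0 / G) powr p"
proof -
  have G: "0 < G" using G1 by linarith
  define z where "z = (L / G) powr (1 / p)"
  have z: "0 \<le> z" unfolding z_def by simp
  have L_eq: "L = G * z powr p"
    unfolding z_def using L G p by (simp add: powr_powr)
  have L_powr: "L powr ((p - 1) / p) = G powr ((p - 1) / p) * z powr (p - 1)"
    unfolding z_def using L G p by (simp add: powr_powr powr_mult[symmetric])
  have G_powr: "G powr ((p - 1) / p) * G powr (1 / p) = G"
    using G p by (simp add: powr_add[symmetric] add_divide_distrib[symmetric])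
  have "p * G1 powr (1 / p) * L powr ((p - 1) / p)
      = p * z powr (p - 1) * G powr ((p - 1) / p) * G1 powr (1 / p)"
    by (simp add: L_powr mult_ac)
  also have "\<dots> \<le> p * z powr (p - 1) * G powr ((p - 1) / p) * G powr (1 / p)"
    using G1 p by (intro mult_left_mono powr_mono2) auto
  also have "\<dots> = p * G * z powr (p - 1)"
    by (simp only: mult.assoc G_powr) (simp add: mult_ac)
  finally have "p * G1 powr (1 / p) * L powr ((p - 1) / p) \<le> p * G * z powr (p - 1)" .
  with Hardy have "(p - 1) * (G * z powr p) + K0 \<le> p * G * z powr (p - 1)"
    by (simp add: L_eq[symmetric])
  then have "K0 / G \<le> H_p p z"
    using G by (simp add: H_p_def field_simps)
  then have "z \<le> omega_p p (K0 / G)"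
    using K0 G p z by (intro le_omega_p) auto
  then show ?thesis
    using G z p by (subst L_eq) (auto intro: mult_left_mono powr_mono2)
qed

section \<open>Holder and layer-cake formulas\<close>

lemma Youngs_inequality_scaled:
  fixes p a b A B :: real
  assumes p: "1 < p" and ab: "0 \<le> a" "0 \<le> b" and AB: "0 < A" "0 < B"
  defines "q \<equiv> p / (p - 1)"
  shows "a * b \<le> A powr (1 / p) * B powr (1 / q) * (a powr p / (p * A) + b powr q / (q * B))"
proof -
  have q: "1 < q" "1 / p + 1 / q = 1"
    using p by (auto simp: q_def field_simps)
  define \<alpha> \<beta> where "\<alpha> = A powr (1 / p)" and "\<beta> = B powr (1 / q)"
  have pos: "0 < \<alpha>" "0 < \<beta>" and "\<alpha> powr p = A" "\<beta> powr q = B"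
    using AB p q by (auto simp: \<alpha>_def \<beta>_def powr_powr)
  have "(a / \<alpha>) * (b / \<beta>) \<le> (a / \<alpha>) powr p / p + (b / \<beta>) powr q / q"
    using Youngs_inequality[of p q "a / \<alpha>" "b / \<beta>"] ab pos p q by simp
  also have "\<dots> = a powr p / A / p + b powr q / B / q"
    using ab pos \<open>\<alpha> powr p = A\<close> \<open>\<beta> powr q = B\<close> by (simp add: powr_divide)
  finally show ?thesis
    using pos unfolding \<alpha>_def[symmetric] \<beta>_def[symmetric] by (simp add: field_simps)
qed

lemma nn_integral_Holder:
  fixes N :: "'b measure" and a b :: "'b \<Rightarrow> real" and p A B :: real
  assumes p: "1 < p"
    and [measurable]: "a \<in> borel_measurable N" "b \<in> borel_measurable N"
    and a: "\<And>x. 0 \<le> a x" and b: "\<And>x. 0 \<le> b x"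
    and A: "(\<integral>\<^sup>+x. ennreal (a x powr p) \<partial>N) = ennreal A" "0 \<le> A"
    and B: "(\<integral>\<^sup>+x. ennreal (b x powr (p / (p - 1))) \<partial>N) = ennreal B" "0 \<le> B"
  shows "(\<integral>\<^sup>+x. ennreal (a x * b x) \<partial>N) \<le> ennreal (A powr (1 / p) * B powr ((p - 1) / p))"
proof (cases "A = 0 \<or> B = 0")
  case True
  have "AE x in N. a x powr p = 0 \<or> b x powr (p / (p - 1)) = 0"
  proof (cases "A = 0")
    case True
    then have "AE x in N. ennreal (a x powr p) = 0"
      using A by (subst nn_integral_0_iff_AE[symmetric]) auto
    then show ?thesis by eventually_elim auto
  next
    case False
    then have "AE x in N. ennreal (b x powr (p / (p - 1))) = 0"
      using B \<open>A = 0 \<or> B = 0\<close> by (subst nn_integral_0_iff_AE[symmetric]) auto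
    then show ?thesis by eventually_elim auto
  qed
  then have "AE x in N. ennreal (a x * b x) = 0"
    by eventually_elim auto
  then have "(\<integral>\<^sup>+x. ennreal (a x * b x) \<partial>N) = (\<integral>\<^sup>+x. 0 \<partial>N)"
    by (rule nn_integral_cong_AE)
  then show ?thesis by simp
next
  case False
  define q where "q = p / (p - 1)"
  define c where "c = A powr (1 / p) * B powr (1 / q)"
  have "0 < A" "0 < B" "0 < c" "0 < q" "1 / p + 1 / q = 1" "(p - 1) / p = 1 / q"
    using False A B p by (auto simp: c_def q_def field_simps)
  define ca cb where "ca = c / (p * A)" and "cb = c / (q * B)"
  have "0 \<le> ca" "0 \<le> cb"
    using \<open>0 < A\<close> \<open>0 < B\<close> \<open>0 < c\<close> \<open>0 < q\<close> p by (auto simp: ca_def cb_def)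
  have "ennreal (a x * b x) \<le> ennreal ca * ennreal (a x powr p) + ennreal cb * ennreal (b x powr q)" for x
  proof -
    have "a x * b x \<le> ca * a x powr p + cb * b x powr q"
      using Youngs_inequality_scaled[OF p a b \<open>0 < A\<close> \<open>0 < B\<close>]
      unfolding ca_def cb_def c_def q_def by (simp add: field_simps)
    then have "ennreal (a x * b x) \<le> ennreal (ca * a x powr p + cb * b x powr q)"
      by (rule ennreal_leI)
    also have "\<dots> = ennreal ca * ennreal (a x powr p) + ennreal cb * ennreal (b x powr q)"
      using \<open>0 \<le> ca\<close> \<open>0 \<le> cb\<close> by (simp add: ennreal_mult)
    finally show ?thesis .
  qed
  then have "(\<integral>\<^sup>+x. ennreal (a x * b x) \<partial>N)
      \<le> (\<integral>\<^sup>+x. ennreal ca * ennreal (a x powr p) + ennreal cb * ennreal (b x powr q) \<partial>N)"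
    by (intro nn_integral_mono)
  also have "\<dots> = ennreal ca * ennreal A + ennreal cb * ennreal B"
    using A B by (simp add: nn_integral_add nn_integral_cmult q_def)
  also have "\<dots> = ennreal (ca * A + cb * B)"
    using \<open>0 \<le> ca\<close> \<open>0 \<le> cb\<close> A(2) B(2) by (simp add: ennreal_mult)
  also have "ca * A + cb * B = c * (1 / p + 1 / q)"
    using \<open>0 < A\<close> \<open>0 < B\<close> unfolding ca_def cb_def by (simp add: field_simps)
  also have "\<dots> = c"
    by (simp add: \<open>1 / p + 1 / q = 1\<close>)
  finally show ?thesis
    by (simp add: c_def \<open>(p - 1) / p = 1 / q\<close>)
qed

lemma powr_le_Holder_interval:
  fixes g :: "real \<Rightarrow> real" and p a b I G :: real
  assumes p: "1 < p" and ab: "0 \<le> a" "a < b"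
    and [measurable]: "g \<in> borel_measurable borel" and g: "\<And>s. 0 \<le> g s"
    and I: "(\<integral>\<^sup>+s. ennreal (g s) * indicator {a<..b} s \<partial>lborel) = ennreal I" "0 \<le> I"
    and G: "(\<integral>\<^sup>+s. ennreal (g s powr p) * indicator {a<..b} s \<partial>lborel) = ennreal G" "0 \<le> G"
  shows "I powr p \<le> G * (b - a) powr (p - 1)"
proof -
  let ?a = "\<lambda>s. g s * indicator {a<..b} s" and ?b = "\<lambda>s. indicator {a<..b} s :: real"
  have "(\<integral>\<^sup>+s. ennreal (?a s powr p) \<partial>lborel) = ennreal G"
    using G p by (subst G(1)[symmetric], intro nn_integral_cong) (auto simp: indicator_def)
  moreover have "(\<lambda>s. ennreal (?b s powr (p / (p - 1)))) = indicator {a<..b}"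
    by (auto simp: indicator_def fun_eq_iff)
  then have "(\<integral>\<^sup>+s. ennreal (?b s powr (p / (p - 1))) \<partial>lborel) = ennreal (b - a)"
    using ab by simp
  moreover have "ennreal I = (\<integral>\<^sup>+s. ennreal (?a s * ?b s) \<partial>lborel)"
    unfolding I(1)[symmetric] by (intro nn_integral_cong) (auto simp: indicator_def)
  ultimately have "ennreal I \<le> ennreal (G powr (1 / p) * (b - a) powr ((p - 1) / p))"
    using nn_integral_Holder[OF p, of ?a lborel ?b G "b - a"] g G ab by auto
  then have "I \<le> G powr (1 / p) * (b - a) powr ((p - 1) / p)"
    by (simp add: ennreal_le_iff)
  then have "I powr p \<le> (G powr (1 / p) * (b - a) powr ((p - 1) / p)) powr p"
    using I p by (intro powr_mono2) auto
  also have "\<dots> = G * (b - a) powr (p - 1)"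
    using G p ab by (simp add: powr_mult powr_powr)
  finally show ?thesis .
qed

lemma nn_integral_powr_derivative_Ico:
  fixes q c d :: real
  assumes q: "0 < q" and cd: "0 \<le> c" "c \<le> d"
  shows "(\<integral>\<^sup>+y. ennreal (q * y powr (q - 1)) * indicator {c..<d} y \<partial>lborel) = ennreal (d powr q - c powr q)"
proof -
  have deriv: "((\<lambda>y. y powr q) has_vector_derivative q * y powr (q - 1)) (at y)"
    if "y \<in> {c<..<d}" for y
    using that cd
    by (auto intro!: derivative_eq_intros simp: has_real_derivative_iff_has_vector_derivative[symmetric])
  have "continuous_on {c..d} (\<lambda>y. y powr q)"
    using cd q by (intro continuous_on_powr' continuous_intros) auto
  from fundamental_theorem_of_calculus_interior[OF cd(2) this deriv]
  have "((\<lambda>y. q * y powr (q - 1)) has_integral d powr q - c powr q) {c..d}"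
    by simp
  then have integral: "((\<lambda>y. if y \<in> {c..d} then q * y powr (q - 1) else 0) has_integral d powr q - c powr q) UNIV"
    by (simp only: has_integral_restrict_UNIV)
  have "(\<integral>\<^sup>+y. ennreal (q * y powr (q - 1)) * indicator {c..<d} y \<partial>lborel)
      = (\<integral>\<^sup>+y. ennreal (if y \<in> {c..d} then q * y powr (q - 1) else 0) \<partial>lborel)"
    by (intro nn_integral_cong_AE)
      (use AE_lborel_singleton[of d] in \<open>eventually_elim, auto simp: indicator_def\<close>)
  also have "\<dots> = ennreal (d powr q - c powr q)"
    by (rule nn_integral_has_integral_lborel[rotated 2]) (use q integral in auto)
  finally show ?thesis .
qed

lemma nn_integral_powr_p_minus_2:
  fixes p b :: real
  assumes "1 < p" "0 \<le> b"
  shows "(\<integral>\<^sup>+y. ennreal (p * y powr (p - 2)) * indicator {0..<b} y \<partial>lborel)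
    = ennreal (p / (p - 1)) * ennreal (b powr (p - 1))"
proof -
  have "(\<integral>\<^sup>+y. ennreal (p * y powr (p - 2)) * indicator {0..<b} y \<partial>lborel)
    = (\<integral>\<^sup>+y. ennreal (p / (p - 1)) * (ennreal ((p - 1) * y powr (p - 1 - 1)) * indicator {0..<b} y) \<partial>lborel)"
  proof (intro nn_integral_cong)
    fix y
    have "ennreal (p * y powr (p - 2)) = ennreal (p / (p - 1)) * ennreal ((p - 1) * y powr (p - 1 - 1))"
      using assms(1) by (subst ennreal_mult[symmetric]) auto
    then show "ennreal (p * y powr (p - 2)) * indicator {0..<b} y
      = ennreal (p / (p - 1)) * (ennreal ((p - 1) * y powr (p - 1 - 1)) * indicator {0..<b} y)"
      by (simp add: mult.assoc)
  qed
  also have "\<dots> = ennreal (p / (p - 1)) * ennreal (b powr (p - 1))"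
    using nn_integral_powr_derivative_Ico[of "p - 1" 0 b] assms by (subst nn_integral_cmult) auto
  finally show ?thesis .
qed

lemma ennreal_eq_top_if_of_nat_le:
  fixes X :: ennreal
  assumes "\<And>n::nat. of_nat n \<le> X"
  shows "X = \<infinity>"
proof (rule ccontr)
  assume "X \<noteq> \<infinity>"
  then have "X < top"
    by (simp add: top.not_eq_extremum)
  then obtain n where "X < of_nat n"
    using ennreal_Ex_less_of_nat by blast
  with assms[of n] show False by simp
qed

lemma measurable_epow [measurable]: "epow p \<in> borel_measurable borel"
  unfolding epow_def[abs_def] by measurable

lemma nn_integral_layers_powr:
  fixes p :: real and a :: ennreal
  assumes p: "1 < p"
  shows "(\<integral>\<^sup>+y. ennreal (p * y powr (p - 1)) * indicator {y. 0 \<le> y \<and> ennreal y < a} y \<partial>lborel) = epow p a"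
proof (cases "a = \<infinity>")
  case False
  then obtain r where r: "a = ennreal r" "0 \<le> r" by (cases a) auto
  then have "{y. 0 \<le> y \<and> ennreal y < a} = {0..<r}"
    by (auto simp: ennreal_less_iff)
  then show ?thesis
    using nn_integral_powr_derivative_Ico[of p 0 r] p r by (simp add: epow_def)
next
  case True
  have "of_nat n \<le> (\<integral>\<^sup>+y. ennreal (p * y powr (p - 1)) * indicator {y. 0 \<le> y \<and> ennreal y < a} y \<partial>lborel)"
    for n :: nat
  proof -
    have "real n \<le> (real n + 1) powr 1" by simp
    also have "\<dots> \<le> (real n + 1) powr p" using p by (intro powr_mono) auto
    finally have "of_nat n \<le> ennreal ((real n + 1) powr p - 0 powr p)"
      by (simp add: ennreal_of_nat_eq_real_of_nat)
    also have "\<dots> = (\<integral>\<^sup>+y. ennreal (p * y powr (p - 1)) * indicator {0..<real n + 1} y \<partial>lborel)"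
      using nn_integral_powr_derivative_Ico[of p 0 "real n + 1"] p by simp
    also have "\<dots> \<le> (\<integral>\<^sup>+y. ennreal (p * y powr (p - 1)) * indicator {y. 0 \<le> y \<and> ennreal y < a} y \<partial>lborel)"
      using True by (intro nn_integral_mono) (auto simp: indicator_def)
    finally show ?thesis .
  qed
  then have "(\<integral>\<^sup>+y. ennreal (p * y powr (p - 1)) * indicator {y. 0 \<le> y \<and> ennreal y < a} y \<partial>lborel) = \<infinity>"
    by (rule ennreal_eq_top_if_of_nat_le)
  then show ?thesis
    using True by (simp add: epow_def)
qed

lemma nn_integral_layers:
  fixes a :: ennreal
  shows "(\<integral>\<^sup>+y. indicator {y. 0 \<le> y \<and> ennreal y < a} y \<partial>lborel) = a"
proof (cases "a = \<infinity>")
  case False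
  then obtain r where r: "a = ennreal r" "0 \<le> r" by (cases a) auto
  then have "{y. 0 \<le> y \<and> ennreal y < a} = {0..<r}"
    by (auto simp: ennreal_less_iff)
  then show ?thesis using r by simp
next
  case True
  have "of_nat n \<le> emeasure lborel {0::real..}" for n :: nat
  proof -
    have "of_nat n = emeasure lborel {0..<real n}"
      by (simp add: ennreal_of_nat_eq_real_of_nat)
    also have "\<dots> \<le> emeasure lborel {0::real..}"
      by (intro emeasure_mono) auto
    finally show ?thesis .
  qed
  then have "emeasure lborel {0::real..} = \<infinity>"
    by (rule ennreal_eq_top_if_of_nat_le)
  moreover have "{y. 0 \<le> y \<and> ennreal y < a} = {0..}"
    using True by auto
  ultimately show ?thesis
    using True by simp
qed

lemma layer_cake:
  fixes N :: "'a measure" and h :: "'a \<Rightarrow> ennreal" and w :: "real \<Rightarrow> ennreal"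
  assumes "sigma_finite_measure N" and [measurable]: "h \<in> borel_measurable N" "K \<in> sets N"
    "w \<in> borel_measurable borel"
  shows "(\<integral>\<^sup>+x. (\<integral>\<^sup>+y. w y * indicator {y. 0 \<le> y \<and> ennreal y < h x} y \<partial>lborel) * indicator K x \<partial>N)
       = (\<integral>\<^sup>+y. w y * indicator {0..} y * emeasure N ({x\<in>space N. ennreal y < h x} \<inter> K) \<partial>lborel)"
proof -
  interpret pair_sigma_finite N lborel
    using assms(1) by (simp add: pair_sigma_finite_def lborel.sigma_finite_measure_axioms)
  have "Measurable.pred (N \<Otimes>\<^sub>M lborel) (\<lambda>(x, y). 0 \<le> y \<and> ennreal y < h x)"
    by measurable
  then have [measurable]: "(\<lambda>(x, y). w y * indicator {y. 0 \<le> y \<and> ennreal y < h x} y * indicator K x)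
      \<in> borel_measurable (N \<Otimes>\<^sub>M lborel)"
    by (simp add: split_beta' indicator_def pred_def) measurable
  have "(\<integral>\<^sup>+x. (\<integral>\<^sup>+y. w y * indicator {y. 0 \<le> y \<and> ennreal y < h x} y \<partial>lborel) * indicator K x \<partial>N)
      = (\<integral>\<^sup>+x. (\<integral>\<^sup>+y. w y * indicator {y. 0 \<le> y \<and> ennreal y < h x} y * indicator K x \<partial>lborel) \<partial>N)"
    by (simp add: nn_integral_multc)
  also have "\<dots> = (\<integral>\<^sup>+y. (\<integral>\<^sup>+x. w y * indicator {y. 0 \<le> y \<and> ennreal y < h x} y * indicator K x \<partial>N) \<partial>lborel)"
    by (rule Fubini'[symmetric]) measurable
  also have "\<dots> = (\<integral>\<^sup>+y. (\<integral>\<^sup>+x. (w y * indicator {0..} y) * indicator ({x\<in>space N. ennreal y < h x} \<inter> K) x \<partial>N) \<partial>lborel)"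
    by (intro nn_integral_cong) (auto simp: indicator_def)
  also have "\<dots> = (\<integral>\<^sup>+y. w y * indicator {0..} y * emeasure N ({x\<in>space N. ennreal y < h x} \<inter> K) \<partial>lborel)"
    by (intro nn_integral_cong nn_integral_cmult_indicator) measurable
  finally show ?thesis .
qed

lemma ennreal_less_add_inverse_Suc:
  fixes y :: real and a :: ennreal
  assumes "0 \<le> y" "ennreal y < a"
  shows "\<exists>n::nat. ennreal (y + 1 / Suc n) < a"
proof (cases "a = \<infinity>")
  case False
  then obtain r where r: "a = ennreal r" "0 \<le> r" by (cases a) auto
  with assms have "y < r" by (simp add: ennreal_less_iff)
  then obtain n :: nat where "inverse (real (Suc n)) < r - y"
    using reals_Archimedean[of "r - y"] by auto
  then have "ennreal (y + 1 / Suc n) < ennreal r"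
    using assms(1) \<open>y < r\<close> by (intro ennreal_lessI) (auto simp: field_simps)
  with r show ?thesis by blast
qed simp

lemma measure_superlevel_right_continuous:
  fixes h :: "'a \<Rightarrow> ennreal"
  assumes "finite_measure M" and [measurable]: "h \<in> borel_measurable M" and "0 \<le> y"
    and "t < measure M {x\<in>space M. ennreal y < h x}"
  shows "\<exists>y'>y. t < measure M {x\<in>space M. ennreal y' < h x}"
proof -
  define A where "A n = {x\<in>space M. ennreal (y + 1 / Suc n) < h x}" for n :: nat
  have "incseq A"
  proof (intro monoI subsetI)
    fix m n :: nat and x assume "m \<le> n" "x \<in> A m"
    moreover have "ennreal (y + 1 / Suc n) \<le> ennreal (y + 1 / Suc m)"
      using \<open>m \<le> n\<close> by (intro ennreal_leI add_left_mono divide_left_mono) auto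
    ultimately show "x \<in> A n"
      unfolding A_def by (auto intro: le_less_trans)
  qed
  moreover have "range A \<subseteq> sets M"
    unfolding A_def by auto
  moreover have "(\<Union>n. A n) = {x\<in>space M. ennreal y < h x}"
  proof -
    have "ennreal y \<le> ennreal (y + 1 / Suc n)" for n
      by (intro ennreal_leI) simp
    then show ?thesis
      using ennreal_less_add_inverse_Suc[OF \<open>0 \<le> y\<close>]
      unfolding A_def by (auto intro: le_less_trans)
  qed
  ultimately have "(\<lambda>n. measure M (A n)) \<longlonglongrightarrow> measure M {x\<in>space M. ennreal y < h x}"
    using finite_measure.finite_Lim_measure_incseq[OF assms(1)] by metis
  then have "eventually (\<lambda>n. t < measure M (A n)) sequentially"
    using assms(4) by (rule order_tendstoD(1))
  then obtain n where "t < measure M (A n)"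
    by (auto dest: eventually_happens)
  then show ?thesis
    unfolding A_def by (intro exI[of _ "y + 1 / Suc n"]) auto
qed

section \<open>The tree maximal operator\<close>

definition avg :: "'a measure \<Rightarrow> ('a \<Rightarrow> real) \<Rightarrow> 'a set \<Rightarrow> ennreal" where
  "avg M \<phi> I = (\<integral>\<^sup>+ y. ennreal \<bar>\<phi> y\<bar> * indicator I y \<partial>M) / ennreal (measure M I)"

lemma dyadic_max_eq_SUP_avg: "dyadic_max M T \<phi> x = (SUP I\<in>{I\<in>T. x \<in> I}. avg M \<phi> I)"
  unfolding dyadic_max_def avg_def by simp

locale tree_structure =
  fixes M :: "'a measure" and T :: "'a set set" and C :: "'a set \<Rightarrow> 'a set set"
  assumes sets_tree: "\<And>I. I \<in> T \<Longrightarrow> I \<in> sets M"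
    and measure_tree_pos: "\<And>I. I \<in> T \<Longrightarrow> 0 < measure M I"
    and countable_children: "\<And>I. I \<in> T \<Longrightarrow> countable (C I)"
    and disjoint_children: "\<And>I. I \<in> T \<Longrightarrow> disjoint (C I)"
    and children_subset: "\<And>I J. I \<in> T \<Longrightarrow> J \<in> C I \<Longrightarrow> J \<subseteq> I"
    and tree_eq_levels: "T = (\<Union>m. tree_level M C m)"

lemma is_tree_imp_tree_structure:
  assumes "is_tree M T"
  obtains C where "tree_structure M T C"
proof -
  from assms obtain C where
    "\<forall>I\<in>T. C I \<subseteq> T \<and> countable (C I) \<and> (\<exists>J1\<in>C I. \<exists>J2\<in>C I. J1 \<noteq> J2) \<and>
       disjoint (C I) \<and> (\<forall>J\<in>C I. J \<subseteq> I) \<and> \<Union> (C I) = I" "T = (\<Union>m. tree_level M C m)"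
    unfolding is_tree_def by metis
  with assms have "tree_structure M T C"
    unfolding is_tree_def by unfold_locales auto
  then show thesis by (rule that)
qed

context tree_structure
begin

lemma level_subset_tree: "tree_level M C m \<subseteq> T"
  using tree_eq_levels by auto

lemma countable_tree: "countable T"
proof -
  have "countable (tree_level M C m)" for m
  proof (induction m)
    case (Suc m)
    then show ?case
      using level_subset_tree countable_children by auto
  qed simp
  then show ?thesis
    by (subst tree_eq_levels) auto
qed

lemma level_ancestor:
  assumes "J \<in> tree_level M C n" "m \<le> n"
  shows "\<exists>I\<in>tree_level M C m. J \<subseteq> I"
  using assms
proof (induction n arbitrary: J)
  case (Suc n)
  show ?case
  proof (cases "m = Suc n")
    case False
    from Suc.prems obtain I' where I': "I' \<in> tree_level M C n" "J \<in> C I'"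
      by auto
    then have "J \<subseteq> I'"
      using level_subset_tree children_subset by blast
    moreover obtain I where "I \<in> tree_level M C m" "I' \<subseteq> I"
      using Suc.IH[OF I'(1)] Suc.prems False by auto
    ultimately show ?thesis by blast
  qed (use Suc.prems in blast)
qed simp

lemma level_disjoint:
  assumes "I \<in> tree_level M C m" "J \<in> tree_level M C m"
  shows "I = J \<or> I \<inter> J = {}"
  using assms
proof (induction m arbitrary: I J)
  case (Suc m)
  from Suc.prems obtain I' J' where
    I': "I' \<in> tree_level M C m" "I \<in> C I'" and J': "J' \<in> tree_level M C m" "J \<in> C J'"
    by auto
  show ?case
  proof (cases "I' = J'")
    case True
    then have "disjoint (C I')"
      using I' level_subset_tree disjoint_children by blast
    then show ?thesis
      using I' J' True unfolding disjoint_def by blast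
  next
    case False
    then have "I' \<inter> J' = {}"
      using Suc.IH[OF I'(1) J'(1)] by blast
    moreover have "I \<subseteq> I'" "J \<subseteq> J'"
      using I' J' level_subset_tree children_subset by blast+
    ultimately show ?thesis by blast
  qed
qed simp

lemma level_nested:
  assumes "I \<in> tree_level M C m" "J \<in> tree_level M C n" "m \<le> n"
  shows "J \<subseteq> I \<or> I \<inter> J = {}"
  using level_ancestor[OF assms(2,3)] level_disjoint[OF assms(1)] by blast

lemma tree_nested:
  assumes "I \<in> T" "J \<in> T"
  shows "I \<subseteq> J \<or> J \<subseteq> I \<or> I \<inter> J = {}"
proof -
  obtain m n where "I \<in> tree_level M C m" "J \<in> tree_level M C n"
    using assms tree_eq_levels by blast
  then show ?thesis
    using level_nested nat_le_linear by blast
qed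

lemma avg_le_dyadic_max: "I \<in> T \<Longrightarrow> x \<in> I \<Longrightarrow> avg M \<phi> I \<le> dyadic_max M T \<phi> x"
  unfolding dyadic_max_eq_SUP_avg by (intro SUP_upper) auto

lemma measurable_dyadic_max [measurable]: "dyadic_max M T \<phi> \<in> borel_measurable M"
proof -
  have [measurable]: "I \<in> T \<Longrightarrow> I \<in> sets M" for I
    by (rule sets_tree)
  have "(\<lambda>x. SUP I\<in>T. avg M \<phi> I * indicator I x) \<in> borel_measurable M"
    by (rule borel_measurable_SUP[OF countable_tree]) measurable
  moreover have "dyadic_max M T \<phi> = (\<lambda>x. SUP I\<in>T. avg M \<phi> I * indicator I x)"
  proof (rule ext, rule antisym)
    fix x
    show "dyadic_max M T \<phi> x \<le> (SUP I\<in>T. avg M \<phi> I * indicator I x)"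
      unfolding dyadic_max_eq_SUP_avg
      by (rule SUP_least, rule SUP_upper2[where i = I for I]) auto
    show "(SUP I\<in>T. avg M \<phi> I * indicator I x) \<le> dyadic_max M T \<phi> x"
      using avg_le_dyadic_max by (intro SUP_least) (auto simp: indicator_def)
  qed
  ultimately show ?thesis by simp
qed

definition maximal_sets :: "('a \<Rightarrow> real) \<Rightarrow> real \<Rightarrow> 'a set set" where
  "maximal_sets \<phi> t =
     {I\<in>T. ennreal t < avg M \<phi> I \<and> (\<forall>J\<in>T. I \<subset> J \<longrightarrow> avg M \<phi> J \<le> ennreal t)}"

lemma maximal_sets_cover:
  assumes "ennreal t < dyadic_max M T \<phi> x"
  shows "\<exists>I\<in>maximal_sets \<phi> t. x \<in> I"
proof -
  define P where "P m \<longleftrightarrow> (\<exists>I\<in>tree_level M C m. x \<in> I \<and> ennreal t < avg M \<phi> I)" for m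
  from assms obtain I0 where "I0 \<in> T" "x \<in> I0" "ennreal t < avg M \<phi> I0"
    unfolding dyadic_max_eq_SUP_avg less_SUP_iff by blast
  then have "\<exists>m. P m"
    unfolding P_def using tree_eq_levels by blast
  define m where "m = (LEAST m. P m)"
  have "P m"
    unfolding m_def using \<open>\<exists>m. P m\<close> by (rule LeastI_ex)
  then obtain I where I: "I \<in> tree_level M C m" "x \<in> I" "ennreal t < avg M \<phi> I"
    unfolding P_def by blast
  have "avg M \<phi> J \<le> ennreal t" if J: "J \<in> T" "I \<subset> J" for J
  proof (rule ccontr)
    assume "\<not> avg M \<phi> J \<le> ennreal t"
    obtain n where n: "J \<in> tree_level M C n"
      using J tree_eq_levels by blast
    show False
    proof (cases "n < m")
      case True
      with n J I \<open>\<not> avg M \<phi> J \<le> ennreal t\<close> have "P n"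
        unfolding P_def by (auto simp: not_le)
      with True show False
        using not_less_Least[of n P] unfolding m_def by blast
    next
      case False
      then show False
        using level_nested[OF I(1) n] J I(2) by auto
    qed
  qed
  then have "I \<in> maximal_sets \<phi> t"
    unfolding maximal_sets_def using I level_subset_tree by blast
  with I(2) show ?thesis by blast
qed

lemma level_set_dyadic_max_eq_Union:
  "{x\<in>space M. ennreal t < dyadic_max M T \<phi> x} = \<Union>(maximal_sets \<phi> t)"
proof
  show "{x\<in>space M. ennreal t < dyadic_max M T \<phi> x} \<subseteq> \<Union>(maximal_sets \<phi> t)"
    using maximal_sets_cover by blast
  show "\<Union>(maximal_sets \<phi> t) \<subseteq> {x\<in>space M. ennreal t < dyadic_max M T \<phi> x}"
  proof
    fix x assume "x \<in> \<Union>(maximal_sets \<phi> t)"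
    then obtain I where "I \<in> T" "x \<in> I" "ennreal t < avg M \<phi> I"
      unfolding maximal_sets_def by blast
    moreover have "x \<in> space M"
      using sets.sets_into_space[OF sets_tree[OF \<open>I \<in> T\<close>]] \<open>x \<in> I\<close> by blast
    ultimately show "x \<in> {x\<in>space M. ennreal t < dyadic_max M T \<phi> x}"
      using avg_le_dyadic_max[of I x \<phi>] by (auto intro: less_le_trans)
  qed
qed

lemma disjoint_maximal_sets: "disjoint_family_on (\<lambda>I. I) (maximal_sets \<phi> t)"
  unfolding disjoint_family_on_def
proof (intro ballI impI)
  fix I J assume "I \<in> maximal_sets \<phi> t" "J \<in> maximal_sets \<phi> t" "I \<noteq> J"
  then have "I \<in> T" "J \<in> T" "\<not> I \<subset> J" "\<not> J \<subset> I"
    unfolding maximal_sets_def by (auto simp: not_le[symmetric])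
  with \<open>I \<noteq> J\<close> show "I \<inter> J = {}"
    using tree_nested by blast
qed

lemma weak_type_dyadic_max:
  fixes t :: real
  assumes "finite_measure M" and [measurable]: "\<phi> \<in> borel_measurable M" and "\<And>x. 0 \<le> \<phi> x"
  defines "S \<equiv> {x\<in>space M. ennreal t < dyadic_max M T \<phi> x}"
  shows "ennreal t * emeasure M S \<le> (\<integral>\<^sup>+x. ennreal (\<phi> x) * indicator S x \<partial>M)"
proof -
  let ?F = "maximal_sets \<phi> t"
  have "countable ?F"
    using countable_tree by (rule countable_subset[rotated]) (auto simp: maximal_sets_def)
  have sets_F: "I \<in> ?F \<Longrightarrow> I \<in> sets M" for I
    using sets_tree by (auto simp: maximal_sets_def)
  have S_eq: "S = (\<Union>I\<in>?F. I)"
    unfolding S_def using level_set_dyadic_max_eq_Union by simp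
  have each: "ennreal t * emeasure M I \<le> (\<integral>\<^sup>+x. ennreal (\<phi> x) * indicator I x \<partial>M)" if I: "I \<in> ?F" for I
  proof -
    let ?b = "\<integral>\<^sup>+x. ennreal (\<phi> x) * indicator I x \<partial>M"
    have "I \<in> T" "ennreal t < ?b / ennreal (measure M I)"
      using I assms(3) by (auto simp: maximal_sets_def avg_def)
    then have "ennreal t * ennreal (measure M I) \<le> ?b / ennreal (measure M I) * ennreal (measure M I)"
      by (intro mult_right_mono) auto
    also have "\<dots> = ?b"
      using measure_tree_pos[OF \<open>I \<in> T\<close>] by (simp add: ennreal_divide_times ennreal_divide_self)
    finally show ?thesis
      using assms(1) by (simp add: finite_measure.emeasure_eq_measure)
  qed
  have "emeasure M S = (\<integral>\<^sup>+I. emeasure M I \<partial>count_space ?F)"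
    unfolding S_eq by (rule emeasure_UN_countable[OF sets_F \<open>countable ?F\<close> disjoint_maximal_sets])
  then have "ennreal t * emeasure M S = (\<integral>\<^sup>+I. ennreal t * emeasure M I \<partial>count_space ?F)"
    by (simp add: nn_integral_cmult)
  also have "\<dots> \<le> (\<integral>\<^sup>+I. (\<integral>\<^sup>+x. ennreal (\<phi> x) * indicator I x \<partial>M) \<partial>count_space ?F)"
    using each by (intro nn_integral_mono) auto
  also have "\<dots> = (\<integral>\<^sup>+I. emeasure (density M (\<lambda>x. ennreal (\<phi> x))) I \<partial>count_space ?F)"
    using sets_F by (intro nn_integral_cong) (simp add: emeasure_density)
  also have "\<dots> = emeasure (density M (\<lambda>x. ennreal (\<phi> x))) S"
    unfolding S_eq
    by (rule emeasure_UN_countable[symmetric, OF _ \<open>countable ?F\<close> disjoint_maximal_sets])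
      (use sets_F in auto)
  also have "\<dots> = (\<integral>\<^sup>+x. ennreal (\<phi> x) * indicator S x \<partial>M)"
    unfolding S_def by (subst emeasure_density) auto
  finally show ?thesis .
qed

end

section \<open>Decreasing rearrangement and Hardy mean\<close>

definition distrib_fun :: "'a measure \<Rightarrow> ('a \<Rightarrow> real) \<Rightarrow> real \<Rightarrow> real" where
  "distrib_fun M \<phi> y = measure M {x\<in>space M. ennreal y < ennreal (\<phi> x)}"

definition rearrangement :: "'a measure \<Rightarrow> ('a \<Rightarrow> real) \<Rightarrow> real \<Rightarrow> ennreal" where
  "rearrangement M \<phi> t = (SUP y\<in>{y. 0 \<le> y \<and> t < distrib_fun M \<phi> y}. ennreal y)"

text \<open>The Hardy mean \<open>U(s) = s\<^sup>-\<^sup>1 \<integral>\<^sub>0\<^sup>s \<phi>\<^sup>*\<close>, written as \<open>\<integral>\<^sub>0\<^sup>1 \<phi>\<^sup>*(s r) dr\<close>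
  so that it is pointwise antitone in \<open>s\<close>.\<close>
definition hardy_mean :: "'a measure \<Rightarrow> ('a \<Rightarrow> real) \<Rightarrow> real \<Rightarrow> ennreal" where
  "hardy_mean M \<phi> s = (\<integral>\<^sup>+r. rearrangement M \<phi> (s * r) * indicator {0<..1} r \<partial>lborel)"

locale nonneg_function = prob_space M for M :: "'a measure" +
  fixes \<phi> :: "'a \<Rightarrow> real" and f :: real
  assumes measurable_\<phi> [measurable]: "\<phi> \<in> borel_measurable M"
    and nonneg: "\<And>x. 0 \<le> \<phi> x"
    and nn_integral_\<phi>: "(\<integral>\<^sup>+x. ennreal (\<phi> x) \<partial>M) = ennreal f"
    and f_nonneg: "0 \<le> f"
begin

lemma emeasure_superlevel: "emeasure M {x\<in>space M. ennreal y < ennreal (\<phi> x)} = ennreal (distrib_fun M \<phi> y)"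
  by (simp add: distrib_fun_def emeasure_eq_measure)

lemma distrib_fun_antimono: "y1 \<le> y2 \<Longrightarrow> distrib_fun M \<phi> y2 \<le> distrib_fun M \<phi> y1"
  unfolding distrib_fun_def
  by (intro finite_measure_mono) (auto intro: le_less_trans ennreal_leI)

lemma distrib_fun_le_1: "distrib_fun M \<phi> y \<le> 1"
  unfolding distrib_fun_def by (rule prob_le_1)

lemma distrib_fun_Markov:
  assumes "0 \<le> y"
  shows "y * distrib_fun M \<phi> y \<le> f"
proof -
  let ?S = "{x\<in>space M. ennreal y < ennreal (\<phi> x)}"
  have "ennreal (y * distrib_fun M \<phi> y) = (\<integral>\<^sup>+x. ennreal y * indicator ?S x \<partial>M)"
    using assms by (subst nn_integral_cmult_indicator) (auto simp: emeasure_superlevel ennreal_mult distrib_fun_def)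
  also have "\<dots> \<le> (\<integral>\<^sup>+x. ennreal (\<phi> x) \<partial>M)"
    by (intro nn_integral_mono) (auto simp: indicator_def less_imp_le)
  finally show ?thesis
    using f_nonneg by (simp add: nn_integral_\<phi>)
qed

lemma rearrangement_gt_iff:
  assumes "0 \<le> y"
  shows "ennreal y < rearrangement M \<phi> t \<longleftrightarrow> t < distrib_fun M \<phi> y"
proof
  assume "t < distrib_fun M \<phi> y"
  then obtain y' where "y < y'" "t < distrib_fun M \<phi> y'"
    using measure_superlevel_right_continuous[OF finite_measure_axioms _ assms, of "\<lambda>x. ennreal (\<phi> x)"]
    unfolding distrib_fun_def by auto
  then have "ennreal y < ennreal y'" "ennreal y' \<le> rearrangement M \<phi> t"
    using assms unfolding rearrangement_def by (auto intro!: ennreal_lessI SUP_upper)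
  then show "ennreal y < rearrangement M \<phi> t" by simp
next
  assume "ennreal y < rearrangement M \<phi> t"
  then obtain z where "0 \<le> z" "t < distrib_fun M \<phi> z" "ennreal y < ennreal z"
    unfolding rearrangement_def less_SUP_iff by blast
  then show "t < distrib_fun M \<phi> y"
    using assms distrib_fun_antimono[of y z] by (simp add: ennreal_less_iff)
qed

lemma rearrangement_antimono: "t1 \<le> t2 \<Longrightarrow> rearrangement M \<phi> t2 \<le> rearrangement M \<phi> t1"
  unfolding rearrangement_def by (intro SUP_subset_mono) auto

lemma measurable_rearrangement [measurable]: "rearrangement M \<phi> \<in> borel_measurable borel"
proof (rule borel_measurableI_greater)
  fix a :: ennreal
  show "{t \<in> space borel. a < rearrangement M \<phi> t} \<in> sets borel"
  proof (cases a)
    case (real y)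
    then have "{t \<in> space borel. a < rearrangement M \<phi> t} = {..<distrib_fun M \<phi> y}"
      using rearrangement_gt_iff by auto
    then show ?thesis by simp
  qed simp
qed

lemma rearrangement_le_divide:
  assumes "0 < t"
  shows "rearrangement M \<phi> t \<le> ennreal (f / t)"
  unfolding rearrangement_def
proof (rule SUP_least)
  fix y assume y: "y \<in> {y. 0 \<le> y \<and> t < distrib_fun M \<phi> y}"
  then have "y * t \<le> y * distrib_fun M \<phi> y"
    by (intro mult_left_mono) auto
  then have "y * t \<le> f"
    using y distrib_fun_Markov[of y] by simp
  then show "ennreal y \<le> ennreal (f / t)"
    using assms by (intro ennreal_leI) (simp add: field_simps)
qed

lemma rearrangement_neq_top: "0 < s \<Longrightarrow> rearrangement M \<phi> s \<noteq> top"
  using rearrangement_le_divide[of s] by (auto simp: top_unique)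

lemma rearrangement_eq_0:
  assumes "1 \<le> t"
  shows "rearrangement M \<phi> t = 0"
proof -
  have empty: "{y. 0 \<le> y \<and> t < distrib_fun M \<phi> y} = {}"
    using assms distrib_fun_le_1 by (auto simp: not_less intro: order_trans)
  show ?thesis
    unfolding rearrangement_def empty by (simp add: bot_ennreal)
qed

lemma emeasure_superlevel_rearrangement:
  assumes "0 \<le> y" "0 \<le> c"
  shows "emeasure lborel ({t. ennreal y < rearrangement M \<phi> t} \<inter> {0<..c})
    = ennreal (min c (distrib_fun M \<phi> y))"
proof -
  have eq: "{t. ennreal y < rearrangement M \<phi> t} \<inter> {0<..c} = {t. t < distrib_fun M \<phi> y} \<inter> {0<..c}"
    using rearrangement_gt_iff[OF assms(1)] by auto
  show ?thesis
  proof (cases "c < distrib_fun M \<phi> y")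
    case True
    then have "{t. t < distrib_fun M \<phi> y} \<inter> {0<..c} = {0<..c}" by auto
    then show ?thesis using eq True assms(2) by simp
  next
    case False
    then have "{t. t < distrib_fun M \<phi> y} \<inter> {0<..c} = {0<..<distrib_fun M \<phi> y}" by auto
    then show ?thesis using eq False by (simp add: distrib_fun_def)
  qed
qed

lemma layers_rearrangement:
  assumes [measurable]: "w \<in> borel_measurable borel" and "0 \<le> c"
  shows "(\<integral>\<^sup>+t. (\<integral>\<^sup>+y. w y * indicator {y. 0 \<le> y \<and> ennreal y < rearrangement M \<phi> t} y \<partial>lborel)
      * indicator {0<..c} t \<partial>lborel)
    = (\<integral>\<^sup>+y. w y * indicator {0..} y * ennreal (min c (distrib_fun M \<phi> y)) \<partial>lborel)"
proof -
  have "(\<integral>\<^sup>+t. (\<integral>\<^sup>+y. w y * indicator {y. 0 \<le> y \<and> ennreal y < rearrangement M \<phi> t} y \<partial>lborel)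
      * indicator {0<..c} t \<partial>lborel)
    = (\<integral>\<^sup>+y. w y * indicator {0..} y
        * emeasure lborel ({t\<in>space lborel. ennreal y < rearrangement M \<phi> t} \<inter> {0<..c}) \<partial>lborel)"
    by (rule layer_cake) (auto simp: lborel.sigma_finite_measure_axioms)
  also have "\<dots> = (\<integral>\<^sup>+y. w y * indicator {0..} y * ennreal (min c (distrib_fun M \<phi> y)) \<partial>lborel)"
    by (intro nn_integral_cong) (auto simp: indicator_def emeasure_superlevel_rearrangement[OF _ assms(2)])
  finally show ?thesis .
qed

lemma layers_equimeasurable:
  assumes [measurable]: "w \<in> borel_measurable borel"
  shows "(\<integral>\<^sup>+t. (\<integral>\<^sup>+y. w y * indicator {y. 0 \<le> y \<and> ennreal y < rearrangement M \<phi> t} y \<partial>lborel)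
      * indicator {0<..1} t \<partial>lborel)
    = (\<integral>\<^sup>+x. (\<integral>\<^sup>+y. w y * indicator {y. 0 \<le> y \<and> ennreal y < ennreal (\<phi> x)} y \<partial>lborel) \<partial>M)"
proof -
  have "(\<integral>\<^sup>+x. (\<integral>\<^sup>+y. w y * indicator {y. 0 \<le> y \<and> ennreal y < ennreal (\<phi> x)} y \<partial>lborel) \<partial>M)
    = (\<integral>\<^sup>+x. (\<integral>\<^sup>+y. w y * indicator {y. 0 \<le> y \<and> ennreal y < ennreal (\<phi> x)} y \<partial>lborel)
        * indicator (space M) x \<partial>M)"
    by (intro nn_integral_cong) simp
  also have "\<dots> = (\<integral>\<^sup>+y. w y * indicator {0..} y
      * emeasure M ({x\<in>space M. ennreal y < ennreal (\<phi> x)} \<inter> space M) \<partial>lborel)"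
    by (rule layer_cake[OF sigma_finite_measure_axioms]) auto
  also have "\<dots> = (\<integral>\<^sup>+y. w y * indicator {0..} y * ennreal (min 1 (distrib_fun M \<phi> y)) \<partial>lborel)"
  proof -
    have "{x\<in>space M. ennreal y < ennreal (\<phi> x)} \<inter> space M = {x\<in>space M. ennreal y < ennreal (\<phi> x)}"
      for y by auto
    then show ?thesis
      using distrib_fun_le_1 by (simp add: emeasure_superlevel min_absorb2)
  qed
  also have "\<dots> = (\<integral>\<^sup>+t. (\<integral>\<^sup>+y. w y * indicator {y. 0 \<le> y \<and> ennreal y < rearrangement M \<phi> t} y \<partial>lborel)
      * indicator {0<..1} t \<partial>lborel)"
    by (rule layers_rearrangement[symmetric]) auto
  finally show ?thesis ..
qed

lemma nn_integral_rearrangement: "(\<integral>\<^sup>+t. rearrangement M \<phi> t * indicator {0<..1} t \<partial>lborel) = ennreal f"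
  using layers_equimeasurable[of "\<lambda>_. 1"] by (simp add: nn_integral_layers nn_integral_\<phi>)

lemma nn_integral_rearrangement_powr:
  assumes "1 < p"
  shows "(\<integral>\<^sup>+t. epow p (rearrangement M \<phi> t) * indicator {0<..1} t \<partial>lborel)
    = (\<integral>\<^sup>+x. ennreal (\<phi> x powr p) \<partial>M)"
  using layers_equimeasurable[of "\<lambda>y. ennreal (p * y powr (p - 1))"] assms
  by (simp add: nn_integral_layers_powr epow_def nonneg)

lemma Hardy_Littlewood:
  assumes [measurable]: "S \<in> sets M"
  shows "(\<integral>\<^sup>+x. ennreal (\<phi> x) * indicator S x \<partial>M)
    \<le> (\<integral>\<^sup>+t. rearrangement M \<phi> t * indicator {0<..measure M S} t \<partial>lborel)"
proof -
  have "(\<integral>\<^sup>+x. ennreal (\<phi> x) * indicator S x \<partial>M)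
    = (\<integral>\<^sup>+y. indicator {0..} y * emeasure M ({x\<in>space M. ennreal y < ennreal (\<phi> x)} \<inter> S) \<partial>lborel)"
    using layer_cake[OF sigma_finite_measure_axioms _ assms, of "\<lambda>x. ennreal (\<phi> x)" "\<lambda>_. 1"]
    by (simp add: nn_integral_layers)
  also have "\<dots> \<le> (\<integral>\<^sup>+y. indicator {0..} y * ennreal (min (measure M S) (distrib_fun M \<phi> y)) \<partial>lborel)"
  proof (intro nn_integral_mono mult_left_mono)
    fix y
    have "emeasure M ({x\<in>space M. ennreal y < ennreal (\<phi> x)} \<inter> S) \<le> emeasure M S"
      "emeasure M ({x\<in>space M. ennreal y < ennreal (\<phi> x)} \<inter> S)
        \<le> emeasure M {x\<in>space M. ennreal y < ennreal (\<phi> x)}"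
      by (intro emeasure_mono; auto)+
    then show "emeasure M ({x\<in>space M. ennreal y < ennreal (\<phi> x)} \<inter> S)
        \<le> ennreal (min (measure M S) (distrib_fun M \<phi> y))"
      by (simp add: emeasure_eq_measure min_def distrib_fun_def)
  qed auto
  also have "\<dots> = (\<integral>\<^sup>+t. rearrangement M \<phi> t * indicator {0<..measure M S} t \<partial>lborel)"
    using layers_rearrangement[of "\<lambda>_. 1" "measure M S"] by (simp add: nn_integral_layers)
  finally show ?thesis .
qed

lemma nn_integral_rearrangement_le:
  assumes "0 \<le> s"
  shows "(\<integral>\<^sup>+t. rearrangement M \<phi> t * indicator {0<..s} t \<partial>lborel) \<le> ennreal f"
proof -
  have "(\<integral>\<^sup>+t. rearrangement M \<phi> t * indicator {0<..s} t \<partial>lborel)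
      \<le> (\<integral>\<^sup>+t. rearrangement M \<phi> t * indicator {0<..1} t \<partial>lborel)"
    using rearrangement_eq_0 by (intro nn_integral_mono) (auto simp: indicator_def not_le)
  then show ?thesis
    by (simp add: nn_integral_rearrangement)
qed

lemma hardy_mean_scale:
  assumes "0 < s"
  shows "ennreal s * hardy_mean M \<phi> s = (\<integral>\<^sup>+t. rearrangement M \<phi> t * indicator {0<..s} t \<partial>lborel)"
proof -
  have "(\<integral>\<^sup>+t. rearrangement M \<phi> t * indicator {0<..s} t \<partial>lborel)
    = ennreal s * (\<integral>\<^sup>+r. rearrangement M \<phi> (0 + s * r) * indicator {0<..s} (0 + s * r) \<partial>lborel)"
    using assms by (subst nn_integral_real_affine[where c = s and t = 0]) auto
  also have "(\<lambda>r. rearrangement M \<phi> (0 + s * r) * indicator {0<..s} (0 + s * r))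
      = (\<lambda>r. rearrangement M \<phi> (s * r) * indicator {0<..1} r)"
    using assms by (auto simp: indicator_def zero_less_mult_iff mult_le_cancel_left1 fun_eq_iff)
  finally show ?thesis
    unfolding hardy_mean_def ..
qed

lemma hardy_mean_antimono:
  assumes "0 < s1" "s1 \<le> s2"
  shows "hardy_mean M \<phi> s2 \<le> hardy_mean M \<phi> s1"
  unfolding hardy_mean_def
proof (intro nn_integral_mono)
  fix r
  have "rearrangement M \<phi> (s2 * r) \<le> rearrangement M \<phi> (s1 * r)" if "r \<in> {0<..1}"
    using that assms by (intro rearrangement_antimono mult_right_mono) auto
  then show "rearrangement M \<phi> (s2 * r) * indicator {0<..1} r \<le> rearrangement M \<phi> (s1 * r) * indicator {0<..1} r"
    by (auto simp: indicator_def)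
qed

lemma measurable_hardy_mean [measurable]: "hardy_mean M \<phi> \<in> borel_measurable borel"
  unfolding hardy_mean_def
  by (rule lborel.borel_measurable_nn_integral) (simp add: split_beta')

lemma hardy_mean_le_divide:
  assumes "0 < s"
  shows "hardy_mean M \<phi> s \<le> ennreal (f / s)"
proof -
  have "ennreal s * hardy_mean M \<phi> s \<le> ennreal s * ennreal (f / s)"
    using hardy_mean_scale[OF assms] nn_integral_rearrangement_le assms f_nonneg
    by (simp add: ennreal_mult[symmetric])
  then show ?thesis
    using assms by (subst (asm) ennreal_mult_le_mult_iff) auto
qed

lemma hardy_mean_1: "hardy_mean M \<phi> 1 = ennreal f"
  using hardy_mean_scale[of 1] by (simp add: nn_integral_rearrangement)

lemma le_hardy_mean_measure_superlevel_dyadic_max: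
  assumes "tree_structure M T C" and "0 \<le> y"
    and pos: "0 < measure M {x\<in>space M. ennreal y < dyadic_max M T \<phi> x}"
  shows "ennreal y \<le> hardy_mean M \<phi> (measure M {x\<in>space M. ennreal y < dyadic_max M T \<phi> x})"
proof -
  interpret tree_structure M T C by fact
  define S where "S = {x\<in>space M. ennreal y < dyadic_max M T \<phi> x}"
  have [measurable]: "S \<in> sets M"
    unfolding S_def by measurable
  have "ennreal (measure M S) * ennreal y = ennreal y * emeasure M S"
    by (simp add: emeasure_eq_measure mult.commute)
  also have "\<dots> \<le> (\<integral>\<^sup>+x. ennreal (\<phi> x) * indicator S x \<partial>M)"
    unfolding S_def by (rule weak_type_dyadic_max[OF finite_measure_axioms measurable_\<phi> nonneg])
  also have "\<dots> \<le> (\<integral>\<^sup>+t. rearrangement M \<phi> t * indicator {0<..measure M S} t \<partial>lborel)"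
    by (rule Hardy_Littlewood) fact
  also have "\<dots> = ennreal (measure M S) * hardy_mean M \<phi> (measure M S)"
    using pos by (simp add: hardy_mean_scale S_def)
  finally show ?thesis
    using pos unfolding S_def by (subst (asm) ennreal_mult_le_mult_iff) auto
qed

lemma min_measure_superlevel_dyadic_max_le:
  assumes tree: "tree_structure M T C" and "0 < k" "0 \<le> y" "y < z"
  shows "ennreal (min k (measure M {x\<in>space M. ennreal z < dyadic_max M T \<phi> x}))
    \<le> emeasure lborel ({s. ennreal y < hardy_mean M \<phi> s} \<inter> {0<..k})"
proof (cases "measure M {x\<in>space M. ennreal z < dyadic_max M T \<phi> x} = 0")
  case False
  define m where "m = measure M {x\<in>space M. ennreal z < dyadic_max M T \<phi> x}"
  have "0 < m"
    using False by (simp add: m_def zero_less_measure_iff)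
  then have "ennreal z \<le> hardy_mean M \<phi> m"
    unfolding m_def using assms by (intro le_hardy_mean_measure_superlevel_dyadic_max[OF tree]) auto
  have "{0<..min k m} \<subseteq> {s. ennreal y < hardy_mean M \<phi> s} \<inter> {0<..k}"
  proof
    fix s assume s: "s \<in> {0<..min k m}"
    have "ennreal y < ennreal z"
      using assms by (simp add: ennreal_less_iff)
    also have "\<dots> \<le> hardy_mean M \<phi> m" by fact
    also have "\<dots> \<le> hardy_mean M \<phi> s"
      using s by (intro hardy_mean_antimono) auto
    finally show "s \<in> {s. ennreal y < hardy_mean M \<phi> s} \<inter> {0<..k}"
      using s by auto
  qed
  then have "emeasure lborel {0<..min k m} \<le> emeasure lborel ({s. ennreal y < hardy_mean M \<phi> s} \<inter> {0<..k})"
    by (intro emeasure_mono) auto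
  then show ?thesis
    using \<open>0 < m\<close> \<open>0 < k\<close> by (simp add: m_def)
qed (use \<open>0 < k\<close> in simp)

lemma emeasure_superlevel_dyadic_max_le:
  assumes tree: "tree_structure M T C" and [measurable]: "K \<in> sets M"
    and K: "measure M K = k" "0 < k" and "0 \<le> y"
  shows "emeasure M ({x\<in>space M. ennreal y < dyadic_max M T \<phi> x} \<inter> K)
    \<le> emeasure lborel ({s. ennreal y < hardy_mean M \<phi> s} \<inter> {0<..k})"
proof -
  interpret tree_structure M T C by (rule tree)
  define m where "m z = measure M {x\<in>space M. ennreal z < dyadic_max M T \<phi> x}" for z
  let ?\<nu> = "emeasure lborel ({s. ennreal y < hardy_mean M \<phi> s} \<inter> {0<..k})"
  \<comment> \<open>the strict inequality \<open>y < z\<close> of the previous lemma is removed by right-continuity of \<open>m\<close>\<close>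
  have "ennreal (min k (m y)) \<le> ?\<nu>"
  proof (rule ccontr)
    assume "\<not> ennreal (min k (m y)) \<le> ?\<nu>"
    then obtain v where v: "?\<nu> = ennreal v" "0 \<le> v" "v < min k (m y)"
      by (cases ?\<nu>) (auto simp: not_le)
    then obtain z where "y < z" "v < m z"
      using measure_superlevel_right_continuous[OF finite_measure_axioms _ \<open>0 \<le> y\<close>,
          of "dyadic_max M T \<phi>" v]
      unfolding m_def by auto
    with min_measure_superlevel_dyadic_max_le[OF tree K(2) \<open>0 \<le> y\<close>, of z] v show False
      unfolding m_def by auto
  qed
  moreover have "emeasure M ({x\<in>space M. ennreal y < dyadic_max M T \<phi> x} \<inter> K) \<le> ennreal (min k (m y))"
  proof -
    have "emeasure M ({x\<in>space M. ennreal y < dyadic_max M T \<phi> x} \<inter> K) \<le> emeasure M K"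
      "emeasure M ({x\<in>space M. ennreal y < dyadic_max M T \<phi> x} \<inter> K)
        \<le> emeasure M {x\<in>space M. ennreal y < dyadic_max M T \<phi> x}"
      by (intro emeasure_mono; auto)+
    then show ?thesis
      using K by (simp add: m_def emeasure_eq_measure min_def)
  qed
  ultimately show ?thesis
    by (rule order_trans[rotated])
qed

end

section \<open>A Hardy inequality with boundary term\<close>

locale Hardy_setting = nonneg_function +
  fixes p k :: real
  assumes p: "1 < p" and k: "0 < k" "k < 1" and f_pos: "0 < f"
begin

text \<open>In the notation of the header: \<open>mean_real\<close> is U (finite for \<open>s > 0\<close> by
  \<open>hardy_mean_le_divide\<close>), \<open>level_length y = |{U > y} \<inter> (0,k]|\<close>,
  \<open>level_mass y = \<integral>\<^sub>{\<^sub>U\<^sub>>\<^sub>y\<^sub>}\<^sub>\<inter>\<^sub>(\<^sub>0\<^sub>,\<^sub>k\<^sub>] \<phi>\<^sup>*\<close>, \<open>energy N = \<integral>\<^sub>0\<^sup>k min(U,N)^p\<close> and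
  \<open>pairing N = \<integral>\<^sub>0\<^sup>k \<phi>\<^sup>* min(U,N)^(p-1)\<close>.\<close>

definition mean_real :: "real \<Rightarrow> real" where
  "mean_real s = enn2real (hardy_mean M \<phi> s)"

abbreviation mean_k :: real where
  "mean_k \<equiv> mean_real k"

definition level_length :: "real \<Rightarrow> ennreal" where
  "level_length y = emeasure lborel ({s. ennreal y < hardy_mean M \<phi> s} \<inter> {0<..k})"

definition level_mass :: "real \<Rightarrow> ennreal" where
  "level_mass y = (\<integral>\<^sup>+s. rearrangement M \<phi> s * indicator ({s. ennreal y < hardy_mean M \<phi> s} \<inter> {0<..k}) s \<partial>lborel)"

definition energy :: "real \<Rightarrow> ennreal" where
  "energy N = (\<integral>\<^sup>+s. epow p (min (hardy_mean M \<phi> s) (ennreal N)) * indicator {0<..k} s \<partial>lborel)"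

definition pairing :: "real \<Rightarrow> ennreal" where
  "pairing N = (\<integral>\<^sup>+s. rearrangement M \<phi> s * ennreal (min (mean_real s) N powr (p - 1)) * indicator {0<..k} s \<partial>lborel)"

lemma hardy_mean_eq_mean_real: "0 < s \<Longrightarrow> hardy_mean M \<phi> s = ennreal (mean_real s)"
  unfolding mean_real_def using hardy_mean_le_divide[of s]
  by (cases "hardy_mean M \<phi> s") (auto simp: top_unique)

lemma mean_real_nonneg [simp]: "0 \<le> mean_real s"
  by (simp add: mean_real_def)

lemma measurable_mean_real [measurable]: "mean_real \<in> borel_measurable borel"
  unfolding mean_real_def by measurable

lemma mean_k_le_mean_real: "s \<in> {0<..k} \<Longrightarrow> mean_k \<le> mean_real s"
  using hardy_mean_antimono[of s k] hardy_mean_eq_mean_real[of s] hardy_mean_eq_mean_real[of k] k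
  by auto

lemma f_le_mean_k: "f \<le> mean_k"
  using hardy_mean_antimono[of k 1] hardy_mean_eq_mean_real[of k] k hardy_mean_1 by simp

lemma mean_k_pos: "0 < mean_k"
  using f_le_mean_k f_pos by linarith

lemma nn_integral_rearrangement_k:
  "(\<integral>\<^sup>+s. rearrangement M \<phi> s * indicator {0<..k} s \<partial>lborel) = ennreal (k * mean_k)"
  using hardy_mean_scale[of k] hardy_mean_eq_mean_real[of k] k by (simp add: ennreal_mult)

lemma nn_integral_split_k:
  fixes g :: "real \<Rightarrow> ennreal"
  assumes "g \<in> borel_measurable borel"
  shows "(\<integral>\<^sup>+s. g s * indicator {0<..k} s \<partial>lborel) + (\<integral>\<^sup>+s. g s * indicator {k<..1} s \<partial>lborel)
    = (\<integral>\<^sup>+s. g s * indicator {0<..1} s \<partial>lborel)"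
  using k assms by (subst nn_integral_add[symmetric]) (auto intro!: nn_integral_cong simp: indicator_def)

lemma Holder_rearrangement:
  assumes "0 \<le> a" "a < b"
    and "(\<integral>\<^sup>+s. rearrangement M \<phi> s * indicator {a<..b} s \<partial>lborel) = ennreal I" "0 \<le> I"
    and "(\<integral>\<^sup>+s. epow p (rearrangement M \<phi> s) * indicator {a<..b} s \<partial>lborel) = ennreal G" "0 \<le> G"
  shows "I powr p \<le> G * (b - a) powr (p - 1)"
proof (rule powr_le_Holder_interval[OF p assms(1,2), of "\<lambda>s. enn2real (rearrangement M \<phi> s)"])
  show "(\<integral>\<^sup>+s. ennreal (enn2real (rearrangement M \<phi> s)) * indicator {a<..b} s \<partial>lborel) = ennreal I"
    unfolding assms(3)[symmetric] using assms(1)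
    by (intro nn_integral_cong) (auto simp: indicator_def rearrangement_neq_top less_top[symmetric])
  show "(\<integral>\<^sup>+s. ennreal (enn2real (rearrangement M \<phi> s) powr p) * indicator {a<..b} s \<partial>lborel) = ennreal G"
    unfolding assms(5)[symmetric] using assms(1)
    by (intro nn_integral_cong) (auto simp: indicator_def epow_def rearrangement_neq_top)
qed (use assms in auto)

lemma measurable_superlevel_integral [measurable]:
  assumes [measurable]: "g \<in> borel_measurable borel"
  shows "(\<lambda>y. \<integral>\<^sup>+s. g s * indicator ({s. ennreal y < hardy_mean M \<phi> s} \<inter> {0<..k}) s \<partial>lborel)
    \<in> borel_measurable borel"
proof -
  have "Measurable.pred (lborel \<Otimes>\<^sub>M lborel) (\<lambda>(y, s). ennreal y < hardy_mean M \<phi> s \<and> s \<in> {0<..k})"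
    by measurable
  then have "(\<lambda>(y, s). g s * indicator ({s. ennreal y < hardy_mean M \<phi> s} \<inter> {0<..k}) s)
    \<in> borel_measurable (lborel \<Otimes>\<^sub>M lborel)"
    by (simp add: split_beta' indicator_def pred_def) measurable
  from lborel.borel_measurable_nn_integral[OF this] show ?thesis
    by simp
qed

lemma measurable_level_length [measurable]: "level_length \<in> borel_measurable borel"
proof -
  have "level_length = (\<lambda>y. \<integral>\<^sup>+s. 1 * indicator ({s. ennreal y < hardy_mean M \<phi> s} \<inter> {0<..k}) s \<partial>lborel)"
    unfolding level_length_def by simp
  then show ?thesis by simp
qed

lemma measurable_level_mass [measurable]: "level_mass \<in> borel_measurable borel"
  unfolding level_mass_def[abs_def] by measurable

lemma Ioc_subset_superlevel_hardy_mean: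
  assumes "0 \<le> y" "y < mean_k"
  shows "{0<..k} \<subseteq> {s. ennreal y < hardy_mean M \<phi> s}"
proof
  fix s assume s: "s \<in> {0<..k}"
  then have "y < mean_real s"
    using mean_k_le_mean_real[OF s] assms by linarith
  then show "s \<in> {s. ennreal y < hardy_mean M \<phi> s}"
    using s assms hardy_mean_eq_mean_real[of s] by (simp add: ennreal_less_iff)
qed

lemma level_length_below: "0 \<le> y \<Longrightarrow> y < mean_k \<Longrightarrow> level_length y = ennreal k"
  using Ioc_subset_superlevel_hardy_mean k unfolding level_length_def by (simp add: Int_absorb1)

lemma level_mass_below: "0 \<le> y \<Longrightarrow> y < mean_k \<Longrightarrow> level_mass y = ennreal (k * mean_k)"
  using Ioc_subset_superlevel_hardy_mean
  unfolding level_mass_def nn_integral_rearrangement_k[symmetric] by (simp add: Int_absorb1)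

lemma level_mass_le: "level_mass y \<le> ennreal (k * mean_k)"
  unfolding level_mass_def nn_integral_rearrangement_k[symmetric]
  by (intro nn_integral_mono) (auto simp: indicator_def)

text \<open>Weak-type estimate for the Hardy mean: as \<open>U\<close> is antitone, every \<open>s\<close> with \<open>U(s) > y\<close>
  satisfies \<open>s y \<le> s U(s) = \<integral>\<^sub>0\<^sup>s \<phi>\<^sup>* \<le> level_mass y\<close>.\<close>
lemma level_length_le_level_mass:
  assumes "0 < y"
  shows "ennreal y * level_length y \<le> level_mass y"
proof -
  define A where "A = {s. ennreal y < hardy_mean M \<phi> s} \<inter> {0<..k}"
  obtain a where a: "level_mass y = ennreal a" "0 \<le> a"
    using level_mass_le[of y] by (cases "level_mass y") (auto simp: top_unique)
  have "s \<le> a / y" if s: "s \<in> A" for s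
  proof -
    have "{0<..s} \<subseteq> A"
      using s hardy_mean_antimono unfolding A_def by (auto intro: less_le_trans)
    have "ennreal (s * y) \<le> ennreal s * hardy_mean M \<phi> s"
      using s assms unfolding A_def by (auto simp: ennreal_mult intro: mult_left_mono)
    also have "\<dots> = (\<integral>\<^sup>+t. rearrangement M \<phi> t * indicator {0<..s} t \<partial>lborel)"
      using s unfolding A_def by (intro hardy_mean_scale) auto
    also have "\<dots> \<le> level_mass y"
      using \<open>{0<..s} \<subseteq> A\<close> unfolding level_mass_def A_def[symmetric]
      by (intro nn_integral_mono) (auto simp: indicator_def)
    finally have "ennreal (s * y) \<le> ennreal a"
      using a by simp
    then show ?thesis
      using assms a by (simp add: field_simps)
  qed
  then have "level_length y \<le> emeasure lborel {0<..a / y}"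
    unfolding level_length_def A_def[symmetric] by (intro emeasure_mono) (auto simp: A_def)
  then have "ennreal y * level_length y \<le> ennreal y * ennreal (a / y)"
    using assms a by (intro mult_left_mono) auto
  also have "\<dots> = level_mass y"
    using assms a by (simp add: ennreal_mult[symmetric])
  finally show ?thesis .
qed

lemma energy_layers:
  assumes "0 \<le> N"
  shows "energy N = (\<integral>\<^sup>+y. ennreal (p * y powr (p - 1)) * indicator {0..<N} y * level_length y \<partial>lborel)"
proof -
  have "energy N = (\<integral>\<^sup>+s. (\<integral>\<^sup>+y. ennreal (p * y powr (p - 1))
      * indicator {y. 0 \<le> y \<and> ennreal y < min (hardy_mean M \<phi> s) (ennreal N)} y \<partial>lborel)
      * indicator {0<..k} s \<partial>lborel)"
    unfolding energy_def by (simp only: nn_integral_layers_powr[OF p])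
  also have "\<dots> = (\<integral>\<^sup>+y. ennreal (p * y powr (p - 1)) * indicator {0..} y
      * emeasure lborel ({s\<in>space lborel. ennreal y < min (hardy_mean M \<phi> s) (ennreal N)} \<inter> {0<..k}) \<partial>lborel)"
    by (rule layer_cake) (auto simp: lborel.sigma_finite_measure_axioms)
  also have "\<dots> = (\<integral>\<^sup>+y. ennreal (p * y powr (p - 1)) * indicator {0..<N} y * level_length y \<partial>lborel)"
  proof (intro nn_integral_cong)
    fix y :: real
    have "{s\<in>space lborel. ennreal y < min (hardy_mean M \<phi> s) (ennreal N)} =
        (if y < N then {s. ennreal y < hardy_mean M \<phi> s} else {})" if "0 \<le> y"
      using that assms by (auto simp: ennreal_less_iff)
    then show "ennreal (p * y powr (p - 1)) * indicator {0..} y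
        * emeasure lborel ({s\<in>space lborel. ennreal y < min (hardy_mean M \<phi> s) (ennreal N)} \<inter> {0<..k})
      = ennreal (p * y powr (p - 1)) * indicator {0..<N} y * level_length y"
      by (cases "0 \<le> y") (auto simp: indicator_def level_length_def)
  qed
  finally show ?thesis .
qed

lemma energy_le: "0 \<le> N \<Longrightarrow> energy N \<le> ennreal (N powr p * k)"
proof -
  assume "0 \<le> N"
  have "epow p (min (hardy_mean M \<phi> s) (ennreal N)) \<le> ennreal (N powr p)" for s
  proof (cases "hardy_mean M \<phi> s \<le> ennreal N")
    case True
    then obtain r where "hardy_mean M \<phi> s = ennreal r" "0 \<le> r" "r \<le> N"
      using \<open>0 \<le> N\<close> by (cases "hardy_mean M \<phi> s") (auto simp: top_unique)
    then show ?thesis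
      using True p by (auto simp: epow_def intro: powr_mono2)
  qed (use \<open>0 \<le> N\<close> in \<open>auto simp: epow_def\<close>)
  then have "energy N \<le> (\<integral>\<^sup>+s. ennreal (N powr p) * indicator {0<..k} s \<partial>lborel)"
    unfolding energy_def by (intro nn_integral_mono) (auto simp: indicator_def)
  also have "\<dots> = ennreal (N powr p * k)"
    using k by (simp add: nn_integral_cmult_indicator ennreal_mult)
  finally show ?thesis .
qed

lemma nn_integral_level_mass:
  assumes "0 \<le> N"
  shows "(\<integral>\<^sup>+y. ennreal (p * y powr (p - 2)) * indicator {0..<N} y * level_mass y \<partial>lborel)
    = ennreal (p / (p - 1)) * pairing N"
proof -
  let ?w = "\<lambda>y. ennreal (p * y powr (p - 2))"
  let ?ind = "\<lambda>y s. indicator ({s. ennreal y < hardy_mean M \<phi> s} \<inter> {0<..k}) s :: ennreal"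
  have "Measurable.pred (lborel \<Otimes>\<^sub>M lborel) (\<lambda>(s, y). ennreal y < hardy_mean M \<phi> s \<and> s \<in> {0<..k})"
    by measurable
  then have [measurable]: "(\<lambda>(s, y). ?w y * indicator {0..<N} y * (rearrangement M \<phi> s * ?ind y s))
      \<in> borel_measurable (lborel \<Otimes>\<^sub>M lborel)"
    by (simp add: split_beta' indicator_def pred_def) measurable
  have "(\<integral>\<^sup>+y. ?w y * indicator {0..<N} y * level_mass y \<partial>lborel)
    = (\<integral>\<^sup>+y. (\<integral>\<^sup>+s. ?w y * indicator {0..<N} y * (rearrangement M \<phi> s * ?ind y s) \<partial>lborel) \<partial>lborel)"
    unfolding level_mass_def by (intro nn_integral_cong) (rule nn_integral_cmult[symmetric], measurable)
  also have "\<dots> = (\<integral>\<^sup>+s. (\<integral>\<^sup>+y. ?w y * indicator {0..<N} y * (rearrangement M \<phi> s * ?ind y s) \<partial>lborel) \<partial>lborel)"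
    by (rule pair_sigma_finite.Fubini')
      (auto simp: pair_sigma_finite_def lborel.sigma_finite_measure_axioms)
  also have "\<dots> = (\<integral>\<^sup>+s. ennreal (p / (p - 1)) *
      (rearrangement M \<phi> s * ennreal (min (mean_real s) N powr (p - 1)) * indicator {0<..k} s) \<partial>lborel)"
  proof (intro nn_integral_cong)
    fix s
    show "(\<integral>\<^sup>+y. ?w y * indicator {0..<N} y * (rearrangement M \<phi> s * ?ind y s) \<partial>lborel)
      = ennreal (p / (p - 1)) * (rearrangement M \<phi> s * ennreal (min (mean_real s) N powr (p - 1)) * indicator {0<..k} s)"
    proof (cases "s \<in> {0<..k}")
      case True
      have "(\<integral>\<^sup>+y. ?w y * indicator {0..<N} y * (rearrangement M \<phi> s * ?ind y s) \<partial>lborel)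
        = (\<integral>\<^sup>+y. rearrangement M \<phi> s * (?w y * indicator {0..<min (mean_real s) N} y) \<partial>lborel)"
        using True hardy_mean_eq_mean_real[of s]
        by (intro nn_integral_cong) (auto simp: indicator_def ennreal_less_iff mult_ac)
      also have "\<dots> = rearrangement M \<phi> s * (ennreal (p / (p - 1)) * ennreal (min (mean_real s) N powr (p - 1)))"
        using assms p by (subst nn_integral_cmult) (auto simp: nn_integral_powr_p_minus_2)
      finally show ?thesis
        using True by (simp add: mult_ac)
    next
      case False
      then have "?ind y s = 0" for y
        by (simp add: indicator_def)
      then show ?thesis
        using False by simp
    qed
  qed
  also have "\<dots> = ennreal (p / (p - 1)) * pairing N"
    unfolding pairing_def by (rule nn_integral_cmult) measurable
  finally show ?thesis .
qed

lemma energy_Hardy_pointwise: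
  assumes "mean_k \<le> N"
  shows "ennreal (p * y powr (p - 1)) * indicator {0..<N} y * level_length y
      + ennreal (p * y powr (p - 2)) * indicator {0..<mean_k} y * level_mass y
    \<le> ennreal (p * y powr (p - 1)) * indicator {0..<mean_k} y * ennreal k
      + ennreal (p * y powr (p - 2)) * indicator {0..<N} y * level_mass y"
proof (cases "0 \<le> y \<and> y < N")
  case True
  show ?thesis
  proof (cases "y < mean_k")
    case True
    then show ?thesis
      using \<open>0 \<le> y \<and> y < N\<close> level_length_below[of y] by (simp add: indicator_def add.commute)
  next
    case False
    then have "0 < y"
      using mean_k_pos by linarith
    have "y powr (p - 1) = y powr (p - 2) * y"
      using powr_mult_base[of y "p - 2"] \<open>0 < y\<close> by (simp add: mult.commute)
    then have "ennreal (p * y powr (p - 1)) = ennreal (p * y powr (p - 2)) * ennreal y"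
      using p \<open>0 < y\<close> by (simp add: ennreal_mult[symmetric] mult.assoc)
    then have "ennreal (p * y powr (p - 1)) * level_length y \<le> ennreal (p * y powr (p - 2)) * level_mass y"
      using level_length_le_level_mass[OF \<open>0 < y\<close>] by (simp add: mult.assoc mult_left_mono)
    then show ?thesis
      using False True by (simp add: indicator_def)
  qed
next
  case False
  then show ?thesis
    using assms by (auto simp: indicator_def)
qed

text \<open>Layer-cake form of the Hardy inequality with boundary term: the levels below
  \<open>U(k)\<close> contribute exactly \<open>k U(k)\<^sup>p\<close>, the levels above are controlled by the weak-type
  estimate and Fubini.\<close>
lemma energy_Hardy:
  assumes "mean_k \<le> N"
  shows "energy N + ennreal (p / (p - 1)) * ennreal (mean_k powr (p - 1)) * ennreal (k * mean_k)
    \<le> ennreal (k * mean_k powr p) + ennreal (p / (p - 1)) * pairing N"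
proof -
  let ?w1 = "\<lambda>y. ennreal (p * y powr (p - 1))" and ?w2 = "\<lambda>y. ennreal (p * y powr (p - 2))"
  have "0 \<le> N"
    using mean_k_pos assms by linarith
  have "(\<integral>\<^sup>+y. ?w2 y * indicator {0..<mean_k} y * level_mass y \<partial>lborel)
    = (\<integral>\<^sup>+y. ?w2 y * indicator {0..<mean_k} y \<partial>lborel) * ennreal (k * mean_k)"
    by (subst nn_integral_multc[symmetric])
      (auto intro!: nn_integral_cong simp: indicator_def level_mass_below)
  also have "\<dots> = ennreal (p / (p - 1)) * ennreal (mean_k powr (p - 1)) * ennreal (k * mean_k)"
    using mean_k_pos p by (simp add: nn_integral_powr_p_minus_2)
  finally have "energy N + ennreal (p / (p - 1)) * ennreal (mean_k powr (p - 1)) * ennreal (k * mean_k)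
    = (\<integral>\<^sup>+y. ?w1 y * indicator {0..<N} y * level_length y
        + ?w2 y * indicator {0..<mean_k} y * level_mass y \<partial>lborel)"
    by (simp add: energy_layers[OF \<open>0 \<le> N\<close>] nn_integral_add)
  also have "\<dots> \<le> (\<integral>\<^sup>+y. ?w1 y * indicator {0..<mean_k} y * ennreal k
      + ?w2 y * indicator {0..<N} y * level_mass y \<partial>lborel)"
    by (intro nn_integral_mono energy_Hardy_pointwise assms)
  also have "\<dots> = (\<integral>\<^sup>+y. ?w1 y * indicator {0..<mean_k} y \<partial>lborel) * ennreal k
      + ennreal (p / (p - 1)) * pairing N"
    by (simp add: nn_integral_add nn_integral_multc nn_integral_level_mass[OF \<open>0 \<le> N\<close>])
  also have "\<dots> = ennreal (k * mean_k powr p) + ennreal (p / (p - 1)) * pairing N"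
    using nn_integral_powr_derivative_Ico[of p 0 mean_k] mean_k_pos p k by (simp add: ennreal_mult mult.commute)
  finally show ?thesis .
qed

lemma pairing_le_Holder:
  assumes "0 \<le> N"
    and G: "(\<integral>\<^sup>+s. epow p (rearrangement M \<phi> s) * indicator {0<..k} s \<partial>lborel) = ennreal G" "0 \<le> G"
  shows "pairing N \<le> ennreal (G powr (1 / p) * enn2real (energy N) powr ((p - 1) / p))"
proof -
  let ?a = "\<lambda>s. enn2real (rearrangement M \<phi> s) * indicator {0<..k} s"
  let ?b = "\<lambda>s. min (mean_real s) N powr (p - 1) * indicator {0<..k} s"
  have "(\<integral>\<^sup>+s. ennreal (?a s powr p) \<partial>lborel) = ennreal G"
    unfolding G(1)[symmetric] using p
    by (intro nn_integral_cong) (auto simp: indicator_def epow_def rearrangement_neq_top less_top[symmetric])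
  moreover have "(\<integral>\<^sup>+s. ennreal (?b s powr (p / (p - 1))) \<partial>lborel) = ennreal (enn2real (energy N))"
  proof -
    have "min (hardy_mean M \<phi> s) (ennreal N) = ennreal (min (mean_real s) N)" if "0 < s" for s
      using that assms hardy_mean_eq_mean_real[of s] by (auto simp: min_def)
    then have "(\<integral>\<^sup>+s. ennreal (?b s powr (p / (p - 1))) \<partial>lborel) = energy N"
      unfolding energy_def using p assms
      by (intro nn_integral_cong) (auto simp: indicator_def epow_def powr_powr)
    then show ?thesis
      using energy_le[OF assms(1)] by (cases "energy N") (auto simp: top_unique)
  qed
  moreover have "pairing N = (\<integral>\<^sup>+s. ennreal (?a s * ?b s) \<partial>lborel)"
    unfolding pairing_def
    by (intro nn_integral_cong) (auto simp: indicator_def ennreal_mult rearrangement_neq_top less_top[symmetric])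
  ultimately show ?thesis
    using nn_integral_Holder[OF p, of ?a lborel ?b G "enn2real (energy N)"] G(2) by auto
qed

lemma Hardy_inequality_energy:
  assumes "mean_k \<le> N"
    and G: "(\<integral>\<^sup>+s. epow p (rearrangement M \<phi> s) * indicator {0<..k} s \<partial>lborel) = ennreal G" "0 \<le> G"
  shows "(p - 1) * enn2real (energy N) + k * mean_k powr p
    \<le> p * G powr (1 / p) * enn2real (energy N) powr ((p - 1) / p)"
proof -
  define L H q where "L = enn2real (energy N)" and "H = G powr (1 / p) * L powr ((p - 1) / p)"
    and "q = p / (p - 1)"
  have "0 \<le> N" "0 \<le> L" "0 \<le> H" "0 < q" "q * (p - 1) = p"
    using mean_k_pos assms p by (auto simp: L_def H_def q_def)
  have energy: "energy N = ennreal L"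
    unfolding L_def using energy_le[OF \<open>0 \<le> N\<close>] by (cases "energy N") (auto simp: top_unique)
  have "ennreal (L + q * (mean_k powr (p - 1) * (k * mean_k)))
    \<le> ennreal (k * mean_k powr p) + ennreal q * pairing N"
    using energy_Hardy[OF assms(1), folded q_def] energy k mean_k_pos \<open>0 \<le> L\<close> \<open>0 < q\<close>
    by (simp add: ennreal_mult[symmetric] mult.assoc)
  moreover have "mean_k powr (p - 1) * (k * mean_k) = k * mean_k powr p"
    using powr_mult_base[of mean_k "p - 1"] mean_k_pos by (simp add: mult_ac)
  ultimately have "ennreal (L + q * (k * mean_k powr p)) \<le> ennreal (k * mean_k powr p) + ennreal q * pairing N"
    by simp
  also have "\<dots> \<le> ennreal (k * mean_k powr p) + ennreal q * ennreal H"
    using pairing_le_Holder[OF \<open>0 \<le> N\<close> G] by (intro add_left_mono mult_left_mono) (auto simp: H_def L_def)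
  also have "\<dots> = ennreal (k * mean_k powr p + q * H)"
    using k \<open>0 \<le> H\<close> \<open>0 < q\<close> by (simp add: ennreal_mult)
  finally have "L + q * (k * mean_k powr p) \<le> k * mean_k powr p + q * H"
    using k \<open>0 \<le> L\<close> \<open>0 \<le> H\<close> \<open>0 < q\<close> by (subst (asm) ennreal_le_iff) auto
  then have "(p - 1) * (L + q * (k * mean_k powr p)) \<le> (p - 1) * (k * mean_k powr p + q * H)"
    using p by (intro mult_left_mono) auto
  moreover have "(p - 1) * (q * x) = p * x" for x
    using \<open>q * (p - 1) = p\<close> by (simp add: mult.assoc[symmetric] mult.commute[of "p - 1"])
  ultimately have "(p - 1) * L + p * (k * mean_k powr p) \<le> (p - 1) * (k * mean_k powr p) + p * H"
    by (simp add: distrib_left)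
  then show ?thesis
    unfolding H_def L_def by (simp add: algebra_simps)
qed

lemma nn_integral_dyadic_max_le_layers:
  assumes tree: "tree_structure M T C" and [measurable]: "K \<in> sets M" and "measure M K = k"
  shows "(\<integral>\<^sup>+x. epow p (dyadic_max M T \<phi> x) * indicator K x \<partial>M)
    \<le> (\<integral>\<^sup>+y. ennreal (p * y powr (p - 1)) * indicator {0..} y * level_length y \<partial>lborel)"
proof -
  interpret tree_structure M T C by (rule tree)
  let ?w = "\<lambda>y. ennreal (p * y powr (p - 1))"
  have "(\<integral>\<^sup>+x. epow p (dyadic_max M T \<phi> x) * indicator K x \<partial>M)
    = (\<integral>\<^sup>+x. (\<integral>\<^sup>+y. ?w y * indicator {y. 0 \<le> y \<and> ennreal y < dyadic_max M T \<phi> x} y \<partial>lborel)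
        * indicator K x \<partial>M)"
    by (simp only: nn_integral_layers_powr[OF p])
  also have "\<dots> = (\<integral>\<^sup>+y. ?w y * indicator {0..} y
      * emeasure M ({x\<in>space M. ennreal y < dyadic_max M T \<phi> x} \<inter> K) \<partial>lborel)"
    by (rule layer_cake[OF sigma_finite_measure_axioms]) auto
  also have "\<dots> \<le> (\<integral>\<^sup>+y. ?w y * indicator {0..} y * level_length y \<partial>lborel)"
    using emeasure_superlevel_dyadic_max_le[OF tree assms(2,3) k(1)]
    by (intro nn_integral_mono) (auto simp: indicator_def level_length_def intro: mult_left_mono)
  finally show ?thesis .
qed

lemma layers_level_length_le:
  assumes bound: "\<And>N. mean_k \<le> N \<Longrightarrow> energy N \<le> X"
  shows "(\<integral>\<^sup>+y. ennreal (p * y powr (p - 1)) * indicator {0..} y * level_length y \<partial>lborel) \<le> X"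
proof -
  let ?w = "\<lambda>y. ennreal (p * y powr (p - 1))"
  have "(\<integral>\<^sup>+y. ?w y * indicator {0..} y * level_length y \<partial>lborel)
      \<le> (\<integral>\<^sup>+y. (SUP n::nat. ?w y * indicator {0..<real n} y * level_length y) \<partial>lborel)"
  proof (intro nn_integral_mono)
    fix y :: real
    show "?w y * indicator {0..} y * level_length y \<le> (SUP n::nat. ?w y * indicator {0..<real n} y * level_length y)"
    proof (cases "0 \<le> y")
      case True
      obtain n :: nat where "y < real n"
        using reals_Archimedean2 by blast
      then have "?w y * indicator {0..} y * level_length y = ?w y * indicator {0..<real n} y * level_length y"
        using True by simp
      also have "\<dots> \<le> (SUP n::nat. ?w y * indicator {0..<real n} y * level_length y)"
        by (rule SUP_upper) simp
      finally show ?thesis .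
    qed simp
  qed
  also have "\<dots> = (SUP n::nat. \<integral>\<^sup>+y. ?w y * indicator {0..<real n} y * level_length y \<partial>lborel)"
    by (rule nn_integral_monotone_convergence_SUP)
      (auto intro!: monoI le_funI mult_right_mono mult_left_mono simp: indicator_def)
  also have "\<dots> \<le> X"
  proof (rule SUP_least)
    fix n :: nat
    have "(\<integral>\<^sup>+y. ?w y * indicator {0..<real n} y * level_length y \<partial>lborel)
      \<le> (\<integral>\<^sup>+y. ?w y * indicator {0..<max (real n) mean_k} y * level_length y \<partial>lborel)"
      by (intro nn_integral_mono mult_right_mono mult_left_mono) (auto simp: indicator_def)
    also have "\<dots> = energy (max (real n) mean_k)"
      using mean_k_pos by (intro energy_layers[symmetric]) auto
    also have "\<dots> \<le> X"
      by (rule bound) simp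
    finally show "(\<integral>\<^sup>+y. ?w y * indicator {0..<real n} y * level_length y \<partial>lborel) \<le> X" .
  qed
  finally show ?thesis .
qed

end

section \<open>The Bellman function\<close>

lemma bdd_above_omega_p_bounds:
  fixes p f F k :: real
  assumes p: "1 < p"
  shows "bdd_above {(F - (f - B) powr p / (1 - k) powr (p - 1)) *
            omega_p p (B powr p / (k powr (p - 1) * (F - (f - B) powr p / (1 - k) powr (p - 1)))) powr p
          | B. B \<in> {0..f} \<and>
               (f - B) powr p / (1 - k) powr (p - 1) + B powr p / k powr (p - 1) \<le> F}"
proof (rule bdd_aboveI[of _ "F * (p / (p - 1)) powr p"])
  fix v assume "v \<in> {(F - (f - B) powr p / (1 - k) powr (p - 1)) *
            omega_p p (B powr p / (k powr (p - 1) * (F - (f - B) powr p / (1 - k) powr (p - 1)))) powr p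
          | B. B \<in> {0..f} \<and>
               (f - B) powr p / (1 - k) powr (p - 1) + B powr p / k powr (p - 1) \<le> F}"
  then obtain B where B: "(f - B) powr p / (1 - k) powr (p - 1) + B powr p / k powr (p - 1) \<le> F"
    and v: "v = (F - (f - B) powr p / (1 - k) powr (p - 1)) *
      omega_p p (B powr p / (k powr (p - 1) * (F - (f - B) powr p / (1 - k) powr (p - 1)))) powr p"
    by blast
  define G where "G = F - (f - B) powr p / (1 - k) powr (p - 1)"
  define y where "y = B powr p / (k powr (p - 1) * G)"
  have "B powr p / k powr (p - 1) \<le> G" "G \<le> F"
    using B unfolding G_def by simp_all
  then have "0 \<le> G"
    by (smt (verit) divide_nonneg_nonneg powr_ge_zero)
  have "0 \<le> y"
    unfolding y_def using \<open>0 \<le> G\<close> by simp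
  moreover have "y \<le> 1"
  proof (cases "G = 0")
    case False
    then have "0 < G"
      using \<open>0 \<le> G\<close> by simp
    have "y = (B powr p / k powr (p - 1)) / G"
      unfolding y_def by (simp add: divide_divide_eq_left)
    also have "\<dots> \<le> 1"
      using divide_le_eq_1_pos[OF \<open>0 < G\<close>] \<open>B powr p / k powr (p - 1) \<le> G\<close> by blast
    finally show ?thesis .
  qed (simp add: y_def)
  ultimately have "omega_p p y \<in> {1..p / (p - 1)}"
    by (rule omega_p_inverse(1)[OF p])
  then have "omega_p p y powr p \<le> (p / (p - 1)) powr p"
    using p by (intro powr_mono2) auto
  then have "G * omega_p p y powr p \<le> F * (p / (p - 1)) powr p"
    using \<open>0 \<le> G\<close> \<open>G \<le> F\<close> by (intro mult_mono) auto
  then show "v \<le> F * (p / (p - 1)) powr p"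
    unfolding v G_def[symmetric] y_def[symmetric] .
qed

lemma bellman_leI:
  assumes "\<And>\<phi> K. \<phi> \<in> borel_measurable M \<Longrightarrow> \<forall>x. 0 \<le> \<phi> x \<Longrightarrow>
      (\<integral>\<^sup>+x. ennreal (\<phi> x) \<partial>M) = ennreal f \<Longrightarrow> (\<integral>\<^sup>+x. ennreal (\<phi> x powr p) \<partial>M) = ennreal F \<Longrightarrow>
      K \<in> sets M \<Longrightarrow> measure M K = k \<Longrightarrow>
      (\<integral>\<^sup>+x. epow p (dyadic_max M T \<phi> x) * indicator K x \<partial>M) \<le> X"
  shows "bellman M T p f F k \<le> X"
  unfolding bellman_def using assms by (auto intro!: SUP_least)

locale Bellman_setting = Hardy_setting +
  fixes F :: real
  assumes nn_integral_powr_\<phi>: "(\<integral>\<^sup>+x. ennreal (\<phi> x powr p) \<partial>M) = ennreal F"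
    and F_nonneg: "0 \<le> F"
begin

text \<open>\<open>mass_k\<close> is the \<open>B\<close> of the header, \<open>energy_in\<close> is \<open>G\<^sub>1\<close> and \<open>energy_out = F - G\<^sub>1\<close>.\<close>

abbreviation mass_k :: real where
  "mass_k \<equiv> k * mean_k"

definition energy_in :: real where
  "energy_in = enn2real (\<integral>\<^sup>+s. epow p (rearrangement M \<phi> s) * indicator {0<..k} s \<partial>lborel)"

definition energy_out :: real where
  "energy_out = enn2real (\<integral>\<^sup>+s. epow p (rearrangement M \<phi> s) * indicator {k<..1} s \<partial>lborel)"

lemma energy_in_out:
  "(\<integral>\<^sup>+s. epow p (rearrangement M \<phi> s) * indicator {0<..k} s \<partial>lborel) = ennreal energy_in"
  "(\<integral>\<^sup>+s. epow p (rearrangement M \<phi> s) * indicator {k<..1} s \<partial>lborel) = ennreal energy_out"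
  "energy_in + energy_out = F"
proof -
  have sum: "(\<integral>\<^sup>+s. epow p (rearrangement M \<phi> s) * indicator {0<..k} s \<partial>lborel)
      + (\<integral>\<^sup>+s. epow p (rearrangement M \<phi> s) * indicator {k<..1} s \<partial>lborel) = ennreal F"
    using p by (simp add: nn_integral_split_k nn_integral_rearrangement_powr nn_integral_powr_\<phi>)
  then show in_eq: "(\<integral>\<^sup>+s. epow p (rearrangement M \<phi> s) * indicator {0<..k} s \<partial>lborel) = ennreal energy_in"
    and out_eq: "(\<integral>\<^sup>+s. epow p (rearrangement M \<phi> s) * indicator {k<..1} s \<partial>lborel) = ennreal energy_out"
    unfolding energy_in_def energy_out_def by (auto simp: ennreal_enn2real_if)
  show "energy_in + energy_out = F"
  proof -
    have "ennreal (energy_in + energy_out) = ennreal F"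
      using sum unfolding in_eq out_eq by (simp add: energy_in_def energy_out_def)
    moreover have "0 \<le> energy_in + energy_out"
      by (simp add: energy_in_def energy_out_def)
    ultimately show ?thesis
      using F_nonneg ennreal_inj by blast
  qed
qed

lemma energy_in_nonneg: "0 \<le> energy_in" and energy_out_nonneg: "0 \<le> energy_out"
  by (simp_all add: energy_in_def energy_out_def)

lemma nn_integral_rearrangement_out:
  "(\<integral>\<^sup>+s. rearrangement M \<phi> s * indicator {k<..1} s \<partial>lborel) = ennreal (f - mass_k)"
  "mass_k \<le> f"
proof -
  have sum: "ennreal mass_k + (\<integral>\<^sup>+s. rearrangement M \<phi> s * indicator {k<..1} s \<partial>lborel) = ennreal f"
    using nn_integral_split_k[of "rearrangement M \<phi>"]
    by (simp add: nn_integral_rearrangement_k nn_integral_rearrangement)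
  then obtain x where x: "(\<integral>\<^sup>+s. rearrangement M \<phi> s * indicator {k<..1} s \<partial>lborel) = ennreal x" "0 \<le> x"
    by (cases "\<integral>\<^sup>+s. rearrangement M \<phi> s * indicator {k<..1} s \<partial>lborel") auto
  with sum have "mass_k + x = f"
    using k mean_k_pos f_nonneg by (simp del: ennreal_plus add: ennreal_plus[symmetric])
  with x show "(\<integral>\<^sup>+s. rearrangement M \<phi> s * indicator {k<..1} s \<partial>lborel) = ennreal (f - mass_k)"
    "mass_k \<le> f"
    by auto
qed

lemma mass_k_powr: "mass_k powr p / k powr (p - 1) = k * mean_k powr p"
proof -
  have "k powr p = k powr (p - 1) * k"
    using powr_mult_base[of k "p - 1"] k by (simp add: mult.commute)
  then show ?thesis
    using k mean_k_pos by (simp add: powr_mult)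
qed

lemma mass_in_le: "k * mean_k powr p \<le> energy_in"
proof -
  have "mass_k powr p \<le> energy_in * k powr (p - 1)"
    using Holder_rearrangement[of 0 k mass_k energy_in] k mean_k_pos energy_in_out(1)
      nn_integral_rearrangement_k energy_in_nonneg by simp
  then have "mass_k powr p / k powr (p - 1) \<le> energy_in"
    using k by (simp add: divide_le_eq)
  then show ?thesis
    by (simp only: mass_k_powr)
qed

lemma mass_out_le: "(f - mass_k) powr p / (1 - k) powr (p - 1) \<le> energy_out"
proof -
  have "(f - mass_k) powr p \<le> energy_out * (1 - k) powr (p - 1)"
    using Holder_rearrangement[of k 1 "f - mass_k" energy_out] k energy_in_out(2)
      nn_integral_rearrangement_out energy_out_nonneg by simp
  then show ?thesis
    using k by (simp add: divide_le_eq)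
qed

lemma h_k_mass_k_le: "(f - mass_k) powr p / (1 - k) powr (p - 1) + mass_k powr p / k powr (p - 1) \<le> F"
  using mass_in_le mass_out_le energy_in_out(3) mass_k_powr by linarith

lemma energy_le_omega_p:
  defines "G \<equiv> F - (f - mass_k) powr p / (1 - k) powr (p - 1)"
  assumes "mean_k \<le> N"
  shows "energy N \<le> ennreal (G * omega_p p (mass_k powr p / (k powr (p - 1) * G)) powr p)"
proof -
  have "0 < k * mean_k powr p"
    using k mean_k_pos by simp
  have "energy_in \<le> G"
    using mass_out_le energy_in_out(3) unfolding G_def by linarith
  have "enn2real (energy N) \<le> G * omega_p p (k * mean_k powr p / G) powr p"
  proof (rule le_omega_p_if_Hardy_inequality[OF p _ _ \<open>energy_in \<le> G\<close> _ _
        Hardy_inequality_energy[OF assms(2) energy_in_out(1)]])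
    show "0 \<le> enn2real (energy N)" "0 \<le> energy_in"
      by (simp_all add: energy_in_nonneg)
    show "0 < energy_in" "0 \<le> k * mean_k powr p" "k * mean_k powr p \<le> G"
      using \<open>0 < k * mean_k powr p\<close> mass_in_le \<open>energy_in \<le> G\<close> by linarith+
  qed
  also have "k * mean_k powr p / G = mass_k powr p / (k powr (p - 1) * G)"
    by (simp only: divide_divide_eq_left[symmetric] mass_k_powr)
  finally have "enn2real (energy N) \<le> G * omega_p p (mass_k powr p / (k powr (p - 1) * G)) powr p" .
  moreover have "energy N = ennreal (enn2real (energy N))"
    using energy_le[of N] mean_k_pos assms(2) by (cases "energy N") (auto simp: top_unique)
  ultimately show ?thesis
    by (metis ennreal_leI)
qed

lemma nn_integral_dyadic_max_le_Sup:
  assumes "tree_structure M T C" "K \<in> sets M" "measure M K = k"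
  shows "(\<integral>\<^sup>+x. epow p (dyadic_max M T \<phi> x) * indicator K x \<partial>M)
    \<le> ennreal (Sup {(F - (f - B) powr p / (1 - k) powr (p - 1)) *
            omega_p p (B powr p / (k powr (p - 1) * (F - (f - B) powr p / (1 - k) powr (p - 1)))) powr p
          | B. B \<in> {0..f} \<and>
               (f - B) powr p / (1 - k) powr (p - 1) + B powr p / k powr (p - 1) \<le> F})"
    (is "_ \<le> ennreal (Sup ?S)")
proof -
  have "mass_k \<in> {0..f}"
    using k mean_k_pos nn_integral_rearrangement_out(2) by simp
  have "(\<integral>\<^sup>+x. epow p (dyadic_max M T \<phi> x) * indicator K x \<partial>M)
      \<le> ennreal ((F - (f - mass_k) powr p / (1 - k) powr (p - 1)) *
           omega_p p (mass_k powr p / (k powr (p - 1) * (F - (f - mass_k) powr p / (1 - k) powr (p - 1)))) powr p)"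
    using nn_integral_dyadic_max_le_layers[OF assms] layers_level_length_le[OF energy_le_omega_p]
    by (rule order_trans)
  also have "\<dots> \<le> ennreal (Sup ?S)"
    using \<open>mass_k \<in> {0..f}\<close> h_k_mass_k_le
    by (intro ennreal_leI cSup_upper bdd_above_omega_p_bounds[OF p]) blast
  finally show ?thesis .
qed

end

theorem corollary3p2:
  fixes M :: "'a measure" and T :: "'a set set" and p f F k :: real
  assumes "prob_space M" and "non_atomic M" and "is_tree M T"
    and "p > 1" and "0 < f" and "f powr p \<le> F" and "0 < k" and "k < 1"
  shows "bellman M T p f F k \<le> ennreal (Sup {(F - (f - B) powr p / (1 - k) powr (p - 1)) *
            omega_p p (B powr p / (k powr (p - 1) * (F - (f - B) powr p / (1 - k) powr (p - 1)))) powr p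
          | B. B \<in> {0..f} \<and>
               (f - B) powr p / (1 - k) powr (p - 1) + B powr p / k powr (p - 1) \<le> F})"
proof (rule bellman_leI, goal_cases)
  case (1 \<phi> K)
  obtain C where tree: "tree_structure M T C"
    using is_tree_imp_tree_structure[OF assms(3)] .
  have "0 \<le> F"
    using assms(6) powr_ge_zero[of f p] by linarith
  interpret Bellman_setting M \<phi> f p k F
    by (intro Bellman_setting.intro Hardy_setting.intro nonneg_function.intro Bellman_setting_axioms.intro
        Hardy_setting_axioms.intro nonneg_function_axioms.intro)
      (use assms 1 \<open>0 \<le> F\<close> in \<open>simp_all add: less_imp_le\<close>)
  show ?case
    using tree 1(5,6) by (rule nn_integral_dyadic_max_le_Sup)
qed

end
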